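(* Let $q(\mathbf{x}_{0:N})$ be a probability density on $(\mathbb{R}^d)^{N+1}$ with finite second moments, and let $p(\mathbf{x}_{0:N})=p(\mathbf{x}_N)\prod_{n=1}^Np(\mathbf{x}_{n-1}|\mathbf{x}_n)$ be a Markov chain with a fixed $p(\mathbf{x}_N)$ and $p(\mathbf{x}_{n-1}|\mathbf{x}_n)=\mathcal{N}(\mathbf{x}_{n-1}|\boldsymbol{\mu}_n(\mathbf{x}_n),\sigma_n^2\mathbf{I})$. Then the problem $\min_{\{\boldsymbol{\mu}_n,\sigma_n^2\}_{n=1}^N}D_{\mathrm{KL}}(q(\mathbf{x}_{0:N})\|p(\mathbf{x}_{0:N}))$ has an optimal solution $$\boldsymbol{\mu}_n^*(\mathbf{x}_n)=\mathbb{E}_{q(\mathbf{x}_{n-1}|\mathbf{x}_n)}[\mathbf{x}_{n-1}],\qquad\sigma_n^{*2}=\mathbb{E}_{q_n(\mathbf{x}_n)}\frac{\mathrm{tr}(\mathrm{Cov}_{q(\mathbf{x}_{n-1}|\mathbf{x}_n)}[\mathbf{x}_{n-1}])}{d},$$ where $q_n$ is the marginal of $\mathbf{x}_n$, and the corresponding optimal value is $$D_{\mathrm{KL}}(q(\mathbf{x}_{0:N})\|p^*(\mathbf{x}_{0:N}))=H(q(\mathbf{x}_N),p(\mathbf{x}_N))+\frac d2\sum_{n=1}^N\log(2\pi e\sigma_n^{*2})-H(q(\mathbf{x}_{0:N})),$$ where $H(\cdot,\cdot)$ is cross-entropy, $H(\cdot)$ is entropy, and $p^*$ is $p$ with $\boldsymbol{\mu}_n=\boldsymbol{\mu}_n^*$,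 $\sigma_n^2=\sigma_n^{*2}$. *)

theory Defs
  imports "HOL-Probability.Probability"
begin

text \<open>Points of (R^d)^(N+1) are functions x :: nat => 'a with index set {0..N};
  the reference measure is the product Lebesgue measure.\<close>

definition path_space :: "nat \<Rightarrow> (nat \<Rightarrow> 'a::euclidean_space) measure" where
  "path_space N = PiM {0..N} (\<lambda>_. lborel)"

definition eint :: "'b measure \<Rightarrow> ('b \<Rightarrow> ereal) \<Rightarrow> ereal" where
  "eint M f = enn2ereal (\<integral>\<^sup>+ x. e2ennreal (f x) \<partial>M) - enn2ereal (\<integral>\<^sup>+ x. e2ennreal (- f x) \<partial>M)"

definition KL_dens :: "'b measure \<Rightarrow> ('b \<Rightarrow> real) \<Rightarrow> ('b \<Rightarrow> real) \<Rightarrow> ereal" where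
  "KL_dens M q p = eint M (\<lambda>x. if q x \<le> 0 then 0 else if p x \<le> 0 then \<infinity>
                                 else ereal (q x * ln (q x / p x)))"

definition cross_entropy_dens :: "'b measure \<Rightarrow> ('b \<Rightarrow> real) \<Rightarrow> ('b \<Rightarrow> real) \<Rightarrow> ereal" where
  "cross_entropy_dens M q p = eint M (\<lambda>x. if q x \<le> 0 then 0 else if p x \<le> 0 then \<infinity>
                                 else ereal (- q x * ln (p x)))"

definition entropy_dens :: "'b measure \<Rightarrow> ('b \<Rightarrow> real) \<Rightarrow> real" where
  "entropy_dens M q = - (\<integral> x. q x * ln (q x) \<partial>M)"

definition marg1 :: "nat \<Rightarrow> ((nat \<Rightarrow> 'a::euclidean_space) \<Rightarrow> real) \<Rightarrow> nat \<Rightarrow> 'a \<Rightarrow> real" where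
  "marg1 N q n b = (\<integral> x. q (x(n := b)) \<partial>(PiM ({0..N} - {n}) (\<lambda>_. lborel)))"

definition marg2 :: "nat \<Rightarrow> ((nat \<Rightarrow> 'a::euclidean_space) \<Rightarrow> real) \<Rightarrow> nat \<Rightarrow> 'a \<Rightarrow> 'a \<Rightarrow> real" where
  "marg2 N q n a b = (\<integral> x. q (x(n - 1 := a, n := b)) \<partial>(PiM ({0..N} - {n - 1, n}) (\<lambda>_. lborel)))"

definition cond_dens :: "nat \<Rightarrow> ((nat \<Rightarrow> 'a::euclidean_space) \<Rightarrow> real) \<Rightarrow> nat \<Rightarrow> 'a \<Rightarrow> 'a \<Rightarrow> real" where
  "cond_dens N q n a b = marg2 N q n a b / marg1 N q n b"

definition opt_mean :: "nat \<Rightarrow> ((nat \<Rightarrow> real^'d) \<Rightarrow> real) \<Rightarrow> nat \<Rightarrow> real^'d \<Rightarrow> real^'d" where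
  "opt_mean N q n b = (\<integral> a. cond_dens N q n a b *\<^sub>R a \<partial>lborel)"

definition cond_trace_cov :: "nat \<Rightarrow> ((nat \<Rightarrow> real^'d) \<Rightarrow> real) \<Rightarrow> nat \<Rightarrow> real^'d \<Rightarrow> real" where
  "cond_trace_cov N q n b =
     (\<Sum>i\<in>UNIV. \<integral> a. cond_dens N q n a b * (a $ i - opt_mean N q n b $ i)\<^sup>2 \<partial>lborel)"

definition opt_var :: "nat \<Rightarrow> ((nat \<Rightarrow> real^'d) \<Rightarrow> real) \<Rightarrow> nat \<Rightarrow> real" where
  "opt_var N q n = (\<integral> b. marg1 N q n b * (cond_trace_cov N q n b / real CARD('d)) \<partial>lborel)"

definition gauss_iso :: "real^'d \<Rightarrow> real \<Rightarrow> real^'d \<Rightarrow> real" where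
  "gauss_iso m s y = (\<Prod>i\<in>UNIV. normal_density (m $ i) (sqrt s) (y $ i))"

definition chain_dens :: "nat \<Rightarrow> (real^'d \<Rightarrow> real) \<Rightarrow> (nat \<Rightarrow> real^'d \<Rightarrow> real^'d) \<Rightarrow> (nat \<Rightarrow> real)
    \<Rightarrow> (nat \<Rightarrow> real^'d) \<Rightarrow> real" where
  "chain_dens N pN \<mu> s x = pN (x N) * (\<Prod>n\<in>{1..N}. gauss_iso (\<mu> n (x n)) (s n) (x (n - 1)))"

end

theory Submission
  imports Defs
begin

text \<open>
  For Gaussian transitions, ln p(x) = ln p(x_N) - sum_n (d/2 ln(2 pi sigma_n^2)
  + |x_(n-1) - mu_n(x_n)|^2 / (2 sigma_n^2)). Hence KL(q || p) is the cross-entropy of the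
  last marginal of q against p(x_N), minus the entropy of q, plus for every n the term
  d/2 ln(2 pi sigma_n^2) + E_q |x_(n-1) - mu_n(x_n)|^2 / (2 sigma_n^2).
  Conditioning on x_n, the bias-variance decomposition gives
  E_q |x_(n-1) - mu_n(x_n)|^2 = d sigma*_n^2 + E_(q_n) |mu*_n(x_n) - mu_n(x_n)|^2, which is
  minimal for mu_n = mu*_n; and ln t <= t - 1 shows that s |-> d/2 ln(2 pi s) + d sigma*_n^2 / (2 s)
  is minimal at s = sigma*_n^2, with value d/2 ln(2 pi e sigma*_n^2).
  The cross-entropy may be infinite, so the divergence is an extended-real integral; adding an
  integrable real function to its integrand shifts it by the integral of that function, and
  adding a nonnegative one does not decrease it, which is all the comparison needs.
\<close>

section \<open>Extended-real integrals\<close>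

lemma ennreal_add_le: "ennreal (a + b) \<le> ennreal a + ennreal b"
  by (simp add: ennreal_plus_if ennreal_leI)

lemma ennreal_le_add: "a \<le> b + c \<Longrightarrow> ennreal a \<le> ennreal b + ennreal c"
  by (rule order_trans[OF ennreal_leI ennreal_add_le])

lemma e2ennreal_add_ereal_le: "e2ennreal (F + ereal u) \<le> e2ennreal F + ennreal \<bar>u\<bar>"
  by (cases F) (auto intro: ennreal_le_add)

lemma e2ennreal_uminus_add_ereal_le: "e2ennreal (- (F + ereal u)) \<le> e2ennreal (- F) + ennreal \<bar>u\<bar>"
  by (cases F) (auto intro: ennreal_le_add)

lemma e2ennreal_le_add_ereal_nonneg: "0 \<le> E \<Longrightarrow> e2ennreal F \<le> e2ennreal (F + ereal E)"
  by (cases F) (auto intro: ennreal_leI)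

lemma ennreal_le_e2ennreal_add: "0 \<le> E \<Longrightarrow> ennreal E \<le> e2ennreal (F + ereal E) + e2ennreal (- F)"
  by (cases F) (auto intro: ennreal_le_add)

lemma ennreal_abs_real_of_ereal_le: "ennreal \<bar>real_of_ereal F\<bar> \<le> e2ennreal F + e2ennreal (- F)"
  by (cases F) (auto simp: abs_if ennreal_neg)

definition eint_pos :: "'a measure \<Rightarrow> ('a \<Rightarrow> ereal) \<Rightarrow> ennreal" where
  "eint_pos M F = (\<integral>\<^sup>+ x. e2ennreal (F x) \<partial>M)"

definition eint_neg :: "'a measure \<Rightarrow> ('a \<Rightarrow> ereal) \<Rightarrow> ennreal" where
  "eint_neg M F = (\<integral>\<^sup>+ x. e2ennreal (- F x) \<partial>M)"

lemma eint_eq_pos_minus_neg: "eint M F = enn2ereal (eint_pos M F) - enn2ereal (eint_neg M F)"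
  unfolding eint_def eint_pos_def eint_neg_def ..

lemma eint_cong: "(\<And>x. x \<in> space M \<Longrightarrow> F x = G x) \<Longrightarrow> eint M F = eint M G"
  unfolding eint_def by (simp cong: nn_integral_cong)

lemma eint_eq_infinityI: "eint_pos M F = \<infinity> \<Longrightarrow> eint M F = \<infinity>"
  unfolding eint_eq_pos_minus_neg by simp

lemma eint_eq_minus_infinityI: "eint_pos M F < \<infinity> \<Longrightarrow> eint_neg M F = \<infinity> \<Longrightarrow> eint M F = - \<infinity>"
  unfolding eint_eq_pos_minus_neg by (cases "eint_pos M F") auto

lemma ennreal_less_top_if_le_add:
  assumes "(a::ennreal) \<le> b + c" "b < \<infinity>" "c < \<infinity>"
  shows "a < \<infinity>"
  using assms by (auto simp: top_unique ennreal_add_eq_top less_top[symmetric])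

lemma nn_integral_add_le:
  assumes "\<And>x. x \<in> space M \<Longrightarrow> f x \<le> g x + h x" "g \<in> borel_measurable M" "h \<in> borel_measurable M"
  shows "(\<integral>\<^sup>+ x. f x \<partial>M) \<le> (\<integral>\<^sup>+ x. g x \<partial>M) + (\<integral>\<^sup>+ x. h x \<partial>M)"
proof -
  have "(\<integral>\<^sup>+ x. f x \<partial>M) \<le> (\<integral>\<^sup>+ x. g x + h x \<partial>M)" by (rule nn_integral_mono) (use assms in auto)
  also have "\<dots> = (\<integral>\<^sup>+ x. g x \<partial>M) + (\<integral>\<^sup>+ x. h x \<partial>M)" by (rule nn_integral_add) (use assms in auto)
  finally show ?thesis .
qed

lemma nn_integral_abs_less_top: "integrable M u \<Longrightarrow> (\<integral>\<^sup>+ x. ennreal \<bar>u x\<bar> \<partial>M) < \<infinity>"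
  using integrable_iff_bounded[of M u] by simp

lemma nn_integral_eq_integral_if_finite:
  fixes f :: "'a \<Rightarrow> real"
  assumes "f \<in> borel_measurable M" "\<And>x. x \<in> space M \<Longrightarrow> 0 \<le> f x" "(\<integral>\<^sup>+ x. ennreal (f x) \<partial>M) \<noteq> \<infinity>"
  shows "(\<integral>\<^sup>+ x. ennreal (f x) \<partial>M) = ennreal (\<integral> x. f x \<partial>M)"
  using assms by (intro nn_integral_eq_integral integrableI_nonneg) (auto simp: less_top)

lemma eint_eq_integral:
  fixes g :: "'a \<Rightarrow> real"
  assumes g: "integrable M g" and F: "AE x in M. F x = ereal (g x)"
  shows "eint M F = ereal (integral\<^sup>L M g)"
proof -
  have pos: "eint_pos M F = (\<integral>\<^sup>+ x. ennreal (g x) \<partial>M)" and neg: "eint_neg M F = (\<integral>\<^sup>+ x. ennreal (- g x) \<partial>M)"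
    unfolding eint_pos_def eint_neg_def using F by (auto intro!: nn_integral_cong_AE elim!: AE_mp)
  have "(\<integral>\<^sup>+ x. ennreal (g x) \<partial>M) < \<infinity>" "(\<integral>\<^sup>+ x. ennreal (- g x) \<partial>M) < \<infinity>"
    using nn_integral_abs_less_top[OF g] by (auto elim!: le_less_trans[rotated] intro!: nn_integral_mono ennreal_leI)
  then show ?thesis
    unfolding eint_eq_pos_minus_neg pos neg real_lebesgue_integral_def[OF g]
    by (cases "(\<integral>\<^sup>+ x. ennreal (g x) \<partial>M)"; cases "(\<integral>\<^sup>+ x. ennreal (- g x) \<partial>M)") auto
qed

lemma eint_parts_finite_imp_real:
  assumes F: "F \<in> borel_measurable M" and pos: "eint_pos M F < \<infinity>" and neg: "eint_neg M F < \<infinity>"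
  shows "integrable M (\<lambda>x. real_of_ereal (F x))" "AE x in M. F x = ereal (real_of_ereal (F x))"
proof -
  have "AE x in M. e2ennreal (F x) \<noteq> \<infinity>"
    by (rule nn_integral_PInf_AE) (use F pos in \<open>auto simp: eint_pos_def\<close>)
  moreover have "AE x in M. e2ennreal (- F x) \<noteq> \<infinity>"
    by (rule nn_integral_PInf_AE) (use F neg in \<open>auto simp: eint_neg_def\<close>)
  ultimately show "AE x in M. F x = ereal (real_of_ereal (F x))"
  proof eventually_elim
    case (elim x)
    then show ?case by (cases "F x") simp_all
  qed
  have "(\<integral>\<^sup>+ x. ennreal (norm (real_of_ereal (F x))) \<partial>M) \<le> eint_pos M F + eint_neg M F"
    unfolding eint_pos_def eint_neg_def
    by (rule nn_integral_add_le) (use F ennreal_abs_real_of_ereal_le in auto)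
  also have "\<dots> < \<infinity>" using pos neg by (simp add: ennreal_add_less_top)
  finally show "integrable M (\<lambda>x. real_of_ereal (F x))"
    by (intro integrableI_bounded) (use F in measurable)
qed

lemma eint_pos_add_le:
  assumes F: "F \<in> borel_measurable M" and u: "u \<in> borel_measurable M"
  shows "eint_pos M (\<lambda>x. F x + ereal (u x)) \<le> eint_pos M F + (\<integral>\<^sup>+ x. ennreal \<bar>u x\<bar> \<partial>M)"
  unfolding eint_pos_def by (rule nn_integral_add_le) (use F u e2ennreal_add_ereal_le in auto)

lemma eint_neg_add_le:
  assumes F: "F \<in> borel_measurable M" and u: "u \<in> borel_measurable M"
  shows "eint_neg M (\<lambda>x. F x + ereal (u x)) \<le> eint_neg M F + (\<integral>\<^sup>+ x. ennreal \<bar>u x\<bar> \<partial>M)"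
  unfolding eint_neg_def by (rule nn_integral_add_le) (use F u e2ennreal_uminus_add_ereal_le in auto)

lemma eint_parts_add_integrable_less_top_iff:
  assumes F: "F \<in> borel_measurable M" and u: "integrable M u"
  shows "eint_pos M (\<lambda>x. F x + ereal (u x)) < \<infinity> \<longleftrightarrow> eint_pos M F < \<infinity>"
    and "eint_neg M (\<lambda>x. F x + ereal (u x)) < \<infinity> \<longleftrightarrow> eint_neg M F < \<infinity>"
proof -
  let ?G = "\<lambda>x. F x + ereal (u x)"
  have G: "?G \<in> borel_measurable M" and um: "u \<in> borel_measurable M" and um': "(\<lambda>x. - u x) \<in> borel_measurable M"
    using F u by measurable
  have U: "(\<integral>\<^sup>+ x. ennreal \<bar>u x\<bar> \<partial>M) < \<infinity>" by (rule nn_integral_abs_less_top[OF u])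
  have F_eq: "?G x + ereal (- u x) = F x" for x
    by (cases "F x") simp_all
  have "eint_pos M F \<le> eint_pos M ?G + (\<integral>\<^sup>+ x. ennreal \<bar>u x\<bar> \<partial>M)"
    using eint_pos_add_le[OF G um'] F_eq by simp
  then show "eint_pos M ?G < \<infinity> \<longleftrightarrow> eint_pos M F < \<infinity>"
    using eint_pos_add_le[OF F um] U ennreal_less_top_if_le_add by blast
  have "eint_neg M F \<le> eint_neg M ?G + (\<integral>\<^sup>+ x. ennreal \<bar>u x\<bar> \<partial>M)"
    using eint_neg_add_le[OF G um'] F_eq by simp
  then show "eint_neg M ?G < \<infinity> \<longleftrightarrow> eint_neg M F < \<infinity>"
    using eint_neg_add_le[OF F um] U ennreal_less_top_if_le_add by blast
qed

lemma eint_add_integrable: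
  assumes F: "F \<in> borel_measurable M" and u: "integrable M u"
  shows "eint M (\<lambda>x. F x + ereal (u x)) = eint M F + ereal (integral\<^sup>L M u)"
proof -
  let ?G = "\<lambda>x. F x + ereal (u x)"
  note pos = eint_parts_add_integrable_less_top_iff(1)[OF F u]
  note neg = eint_parts_add_integrable_less_top_iff(2)[OF F u]
  consider "eint_pos M F = \<infinity>" | "eint_pos M F < \<infinity>" "eint_neg M F = \<infinity>" | "eint_pos M F < \<infinity>" "eint_neg M F < \<infinity>"
    by (auto simp: less_top[symmetric])
  then show ?thesis
  proof cases
    case 1
    then have "eint_pos M ?G = \<infinity>" using pos by (simp add: less_top[symmetric])
    then show ?thesis using 1 by (simp add: eint_eq_infinityI)
  next
    case 2
    then have "eint_pos M ?G < \<infinity>" "eint_neg M ?G = \<infinity>" using pos neg by (simp_all add: less_top[symmetric])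
    then show ?thesis using 2 by (simp add: eint_eq_minus_infinityI)
  next
    case 3
    note F_real = eint_parts_finite_imp_real[OF F 3]
    have "AE x in M. ?G x = ereal (real_of_ereal (F x) + u x)"
      using F_real(2) by eventually_elim (metis plus_ereal.simps(1))
    then have "eint M ?G = ereal (\<integral> x. real_of_ereal (F x) + u x \<partial>M)"
      by (rule eint_eq_integral[OF Bochner_Integration.integrable_add[OF F_real(1) u]])
    moreover have "eint M F = ereal (\<integral> x. real_of_ereal (F x) \<partial>M)"
      by (rule eint_eq_integral[OF F_real])
    ultimately show ?thesis
      using Bochner_Integration.integral_add[OF F_real(1) u] by simp
  qed
qed

lemma eint_add_nonneg_eq_infinity:
  assumes F: "F \<in> borel_measurable M" and E: "E \<in> borel_measurable M"
    and E_nonneg: "\<And>x. x \<in> space M \<Longrightarrow> 0 \<le> E x" and E_inf: "(\<integral>\<^sup>+ x. ennreal (E x) \<partial>M) = \<infinity>"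
    and F_ninf: "eint M F \<noteq> - \<infinity>"
  shows "eint M (\<lambda>x. F x + ereal (E x)) = \<infinity>"
proof (rule eint_eq_infinityI)
  have FE: "(\<lambda>x. F x + ereal (E x)) \<in> borel_measurable M" using F E by measurable
  consider "eint_pos M F = \<infinity>" | "eint_neg M F < \<infinity>"
    using F_ninf eint_eq_minus_infinityI by (auto simp: less_top[symmetric])
  then show "eint_pos M (\<lambda>x. F x + ereal (E x)) = \<infinity>"
  proof cases
    case 1
    have "eint_pos M F \<le> eint_pos M (\<lambda>x. F x + ereal (E x))"
      unfolding eint_pos_def by (intro nn_integral_mono e2ennreal_le_add_ereal_nonneg E_nonneg)
    then show ?thesis using 1 by (simp add: top_unique)
  next
    case 2
    have "(\<integral>\<^sup>+ x. ennreal (E x) \<partial>M) \<le> eint_pos M (\<lambda>x. F x + ereal (E x)) + eint_neg M F"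
      unfolding eint_pos_def eint_neg_def
      by (rule nn_integral_add_le) (use FE F ennreal_le_e2ennreal_add E_nonneg in auto)
    then show ?thesis using 2 E_inf by (auto simp: top_unique ennreal_add_eq_top)
  qed
qed

lemma eint_add_le:
  assumes F: "F \<in> borel_measurable M" and u: "integrable M u" and w: "integrable M w"
    and E: "E \<in> borel_measurable M" and E_nonneg: "\<And>x. x \<in> space M \<Longrightarrow> 0 \<le> E x"
    and le: "ereal (integral\<^sup>L M w) \<le> ereal (integral\<^sup>L M u) + enn2ereal (\<integral>\<^sup>+ x. ennreal (E x) \<partial>M)"
  shows "eint M (\<lambda>x. F x + ereal (w x)) \<le> eint M (\<lambda>x. F x + ereal (u x) + ereal (E x))"
proof (cases "(\<integral>\<^sup>+ x. ennreal (E x) \<partial>M) = \<infinity>")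
  case False
  have E_int: "integrable M E"
    using False E E_nonneg by (intro integrableI_nonneg) (auto simp: less_top)
  have "0 \<le> integral\<^sup>L M E" using E_nonneg by simp
  then have "enn2ereal (\<integral>\<^sup>+ x. ennreal (E x) \<partial>M) = ereal (integral\<^sup>L M E)"
    using nn_integral_eq_integral[OF E_int] E_nonneg by simp
  then have "ereal (integral\<^sup>L M w) \<le> ereal (integral\<^sup>L M (\<lambda>x. u x + E x))"
    using le Bochner_Integration.integral_add[OF u E_int] by simp
  moreover have "F x + ereal (u x) + ereal (E x) = F x + ereal (u x + E x)" for x
    by (cases "F x") simp_all
  ultimately show ?thesis
    using F u w E_int by (simp add: eint_add_integrable add_left_mono)
next
  case E_inf: True
  show ?thesis
  proof (cases "eint M F = - \<infinity>")
    case True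
    then show ?thesis using eint_add_integrable[OF F w] by simp
  next
    case False
    have "F x + ereal (u x) + ereal (E x) = (F x + ereal (E x)) + ereal (u x)" for x
      by (cases "F x") simp_all
    moreover have "eint M (\<lambda>x. F x + ereal (E x)) = \<infinity>"
      by (rule eint_add_nonneg_eq_infinity[OF F E E_nonneg E_inf False])
    ultimately show ?thesis
      using eint_add_integrable[of "\<lambda>x. F x + ereal (E x)" M u] F E u by simp
  qed
qed

section \<open>Bias-variance decomposition\<close>

lemma measurable_vec_nth[measurable]: "(\<lambda>x::real^'n. x $ i) \<in> borel_measurable borel"
  by (intro borel_measurable_continuous_onI linear_continuous_on bounded_linear_vec_nth)

lemma power2_norm_vec: "(norm (v :: real^'d))\<^sup>2 = (\<Sum>i\<in>UNIV. (v $ i)\<^sup>2)"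
  unfolding power2_norm_eq_inner inner_vec_def by (simp add: power2_eq_square)

lemma abs_le_1_plus_power2: "\<bar>x::real\<bar> \<le> 1 + x\<^sup>2"
  using zero_le_power2[of "\<bar>x\<bar> - 1"] unfolding power2_diff by (simp add: power2_abs)

lemma integrable_weighted_moments:
  fixes m :: "real^'d \<Rightarrow> real"
  assumes m_nonneg: "\<And>a. 0 \<le> m a" and m_int: "integrable lborel m"
    and m_moment: "integrable lborel (\<lambda>a. m a * (norm a)\<^sup>2)"
  shows "integrable lborel (\<lambda>a. m a *\<^sub>R a)"
    and "integrable lborel (\<lambda>a. m a * a $ i)"
    and "integrable lborel (\<lambda>a. m a * (a $ i)\<^sup>2)"
proof -
  have m_meas[measurable]: "m \<in> borel_measurable lborel" using m_int by auto
  have bound: "integrable lborel (\<lambda>a. m a + m a * (norm a)\<^sup>2)" using m_int m_moment by auto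
  have "m a * norm a \<le> m a + m a * (norm a)\<^sup>2" for a
    using mult_left_mono[OF abs_le_1_plus_power2[of "norm a"] m_nonneg[of a]] by (simp add: algebra_simps)
  then show "integrable lborel (\<lambda>a. m a *\<^sub>R a)"
    by (intro Bochner_Integration.integrable_bound[OF bound]) (auto simp: m_nonneg)
  have "m a * \<bar>a $ i\<bar> \<le> m a + m a * (norm a)\<^sup>2" for a
    using mult_left_mono[OF abs_le_1_plus_power2[of "a $ i"] m_nonneg[of a]]
      mult_left_mono[OF power_mono[OF component_le_norm_cart[of a i], of 2] m_nonneg[of a]]
    by (simp add: algebra_simps power2_abs)
  then show "integrable lborel (\<lambda>a. m a * a $ i)"
    by (intro Bochner_Integration.integrable_bound[OF bound]) (auto simp: m_nonneg abs_mult)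
  have "m a * (a $ i)\<^sup>2 \<le> m a * (norm a)\<^sup>2" for a
    using mult_left_mono[OF power_mono[OF component_le_norm_cart[of a i], of 2] m_nonneg[of a]]
    by (simp add: power2_abs)
  then show "integrable lborel (\<lambda>a. m a * (a $ i)\<^sup>2)"
    by (intro Bochner_Integration.integrable_bound[OF m_moment]) (auto simp: m_nonneg)
qed

lemma integral_weighted_sq_shift:
  fixes m g :: "'a \<Rightarrow> real"
  assumes m: "integrable M m" and mg: "integrable M (\<lambda>a. m a * g a)" and mg2: "integrable M (\<lambda>a. m a * (g a)\<^sup>2)"
  shows "integrable M (\<lambda>a. m a * (g a - c)\<^sup>2)"
    and "(\<integral> a. m a * g a \<partial>M) = (\<integral> a. m a \<partial>M) * b
      \<Longrightarrow> (\<integral> a. m a * (g a - c)\<^sup>2 \<partial>M) = (\<integral> a. m a * (g a - b)\<^sup>2 \<partial>M) + (\<integral> a. m a \<partial>M) * (b - c)\<^sup>2"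
proof -
  have expand: "(\<lambda>a. m a * (g a - x)\<^sup>2) = (\<lambda>a. m a * (g a)\<^sup>2 - 2 * x * (m a * g a) + x\<^sup>2 * m a)" for x
    by (rule ext) (simp add: power2_eq_square algebra_simps)
  show "integrable M (\<lambda>a. m a * (g a - c)\<^sup>2)"
    unfolding expand using m mg mg2 by simp
  have integral_expand: "(\<integral> a. m a * (g a - x)\<^sup>2 \<partial>M)
      = (\<integral> a. m a * (g a)\<^sup>2 \<partial>M) - 2 * x * (\<integral> a. m a * g a \<partial>M) + x\<^sup>2 * (\<integral> a. m a \<partial>M)" for x
    unfolding expand using m mg mg2 by simp
  show "(\<integral> a. m a * g a \<partial>M) = (\<integral> a. m a \<partial>M) * b
      \<Longrightarrow> (\<integral> a. m a * (g a - c)\<^sup>2 \<partial>M) = (\<integral> a. m a * (g a - b)\<^sup>2 \<partial>M) + (\<integral> a. m a \<partial>M) * (b - c)\<^sup>2"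
    unfolding integral_expand by (simp add: power2_eq_square algebra_simps)
qed

lemma weighted_sq_dist_decomp:
  fixes m :: "real^'d \<Rightarrow> real" and c :: "real^'d"
  assumes m_nonneg: "\<And>a. 0 \<le> m a" and m_int: "integrable lborel m"
    and m_moment: "integrable lborel (\<lambda>a. m a * (norm a)\<^sup>2)"
  defines "Z \<equiv> \<integral> a. m a \<partial>lborel"
  defines "\<mu> \<equiv> \<integral> a. (m a / Z) *\<^sub>R a \<partial>lborel"
  shows "integrable lborel (\<lambda>a. m a * (\<Sum>i\<in>UNIV. (a $ i - c $ i)\<^sup>2))"
    and "(\<integral> a. m a * (\<Sum>i\<in>UNIV. (a $ i - c $ i)\<^sup>2) \<partial>lborel)
          = Z * (\<Sum>i\<in>UNIV. \<integral> a. (m a / Z) * (a $ i - \<mu> $ i)\<^sup>2 \<partial>lborel)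
            + Z * (\<Sum>i\<in>UNIV. (\<mu> $ i - c $ i)\<^sup>2)"
proof -
  note moments = integrable_weighted_moments[OF m_nonneg m_int m_moment]
  note shift = integral_weighted_sq_shift[OF m_int moments(2,3)]
  have sum_eq: "(\<lambda>a. m a * (\<Sum>i\<in>UNIV. (a $ i - c $ i)\<^sup>2)) = (\<lambda>a. \<Sum>i\<in>UNIV. m a * (a $ i - c $ i)\<^sup>2)"
    by (simp add: sum_distrib_left)
  show "integrable lborel (\<lambda>a. m a * (\<Sum>i\<in>UNIV. (a $ i - c $ i)\<^sup>2))"
    unfolding sum_eq using shift(1) by auto
  show "(\<integral> a. m a * (\<Sum>i\<in>UNIV. (a $ i - c $ i)\<^sup>2) \<partial>lborel)
      = Z * (\<Sum>i\<in>UNIV. \<integral> a. (m a / Z) * (a $ i - \<mu> $ i)\<^sup>2 \<partial>lborel) + Z * (\<Sum>i\<in>UNIV. (\<mu> $ i - c $ i)\<^sup>2)"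
  proof (cases "Z = 0")
    case True
    then have "AE a in lborel. m a = 0"
      using integral_nonneg_eq_0_iff_AE[OF m_int] m_nonneg unfolding Z_def by auto
    then have "(\<integral> a. m a * (\<Sum>i\<in>UNIV. (a $ i - c $ i)\<^sup>2) \<partial>lborel) = 0"
      by (intro integral_eq_zero_AE) auto
    then show ?thesis using True by simp
  next
    case False
    have "integrable lborel (\<lambda>a. (m a / Z) *\<^sub>R a)"
      using integrable_scaleR_right[OF moments(1), of "1 / Z"] by simp
    then have "\<mu> $ i = (\<integral> a. m a * a $ i / Z \<partial>lborel)" for i
      unfolding \<mu>_def by (subst integral_bounded_linear[OF bounded_linear_vec_nth, symmetric]) simp_all
    then have "(\<integral> a. m a * a $ i \<partial>lborel) = Z * \<mu> $ i" for i
      using False by (simp add: Z_def)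
    then have "(\<integral> a. m a * (a $ i - c $ i)\<^sup>2 \<partial>lborel)
        = Z * (\<integral> a. (m a / Z) * (a $ i - \<mu> $ i)\<^sup>2 \<partial>lborel) + Z * (\<mu> $ i - c $ i)\<^sup>2" for i
      using shift(2)[where b = "\<mu> $ i" and c = "c $ i"] False by (simp add: Z_def)
    moreover have "(\<integral> a. m a * (\<Sum>i\<in>UNIV. (a $ i - c $ i)\<^sup>2) \<partial>lborel)
        = (\<Sum>i\<in>UNIV. \<integral> a. m a * (a $ i - c $ i)\<^sup>2 \<partial>lborel)"
      unfolding sum_eq using shift(1) by (rule Bochner_Integration.integral_sum)
    ultimately show ?thesis by (simp add: sum.distrib sum_distrib_left)
  qed
qed

lemma weighted_sq_dist_pos:
  fixes m :: "real^'d \<Rightarrow> real" and \<mu> :: "real^'d"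
  assumes m_nonneg: "\<And>a. 0 \<le> m a"
    and m_int: "integrable lborel (\<lambda>a. m a * (\<Sum>i\<in>UNIV. (a $ i - \<mu> $ i)\<^sup>2))"
    and mass_pos: "0 < (\<integral> a. m a \<partial>lborel)"
  shows "0 < (\<integral> a. m a * (\<Sum>i\<in>UNIV. (a $ i - \<mu> $ i)\<^sup>2) \<partial>lborel)"
proof (rule ccontr)
  have nonneg: "0 \<le> m a * (\<Sum>i\<in>UNIV. (a $ i - \<mu> $ i)\<^sup>2)" for a
    by (simp add: m_nonneg sum_nonneg)
  assume "\<not> ?thesis"
  moreover have "0 \<le> (\<integral> a. m a * (\<Sum>i\<in>UNIV. (a $ i - \<mu> $ i)\<^sup>2) \<partial>lborel)"
    by (rule integral_nonneg_AE) (simp add: nonneg)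
  ultimately have "(\<integral> a. m a * (\<Sum>i\<in>UNIV. (a $ i - \<mu> $ i)\<^sup>2) \<partial>lborel) = 0"
    by linarith
  then have "AE a in lborel. m a * (\<Sum>i\<in>UNIV. (a $ i - \<mu> $ i)\<^sup>2) = 0"
    using integral_nonneg_eq_0_iff_AE[OF m_int] nonneg by simp
  moreover have "AE a in lborel. a \<notin> {\<mu>}" \<comment> \<open>Lebesgue measure has no atoms\<close>
    by (rule AE_not_in) (simp add: null_sets_def)
  ultimately have "AE a in lborel. m a = 0"
  proof eventually_elim
    case (elim a)
    then obtain i where "a $ i \<noteq> \<mu> $ i" by (auto simp: vec_eq_iff)
    then have "0 < (\<Sum>j\<in>UNIV. (a $ j - \<mu> $ j)\<^sup>2)"
      by (intro sum_pos2[of _ i]) auto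
    then show "m a = 0" using elim(1) by simp
  qed
  then have "(\<integral> a. m a \<partial>lborel) = 0" by (rule integral_eq_zero_AE)
  then show False using mass_pos by simp
qed

section \<open>Gaussian transitions\<close>

lemma gauss_iso_pos: "0 < s \<Longrightarrow> 0 < gauss_iso m s y"
  unfolding gauss_iso_def by (intro prod_pos normal_density_pos) simp

lemma ln_gauss_iso:
  assumes "0 < s"
  shows "ln (gauss_iso m s (y :: real^'d))
    = - (real CARD('d) / 2 * ln (2 * pi * s)) - (\<Sum>i\<in>UNIV. (y $ i - m $ i)\<^sup>2) / (2 * s)"
proof -
  have "ln (normal_density (m $ i) (sqrt s) (y $ i)) = - (ln (2 * pi * s) / 2) - (y $ i - m $ i)\<^sup>2 / (2 * s)" for i
    using assms unfolding normal_density_def by (simp add: ln_mult ln_div ln_sqrt)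
  moreover have "ln (gauss_iso m s y) = (\<Sum>i\<in>UNIV. ln (normal_density (m $ i) (sqrt s) (y $ i)))"
    unfolding gauss_iso_def using normal_density_pos[of "sqrt s"] assms
    by (intro ln_prod) (auto simp: less_imp_neq[symmetric])
  ultimately show ?thesis
    by (simp add: sum_subtractf sum_divide_distrib)
qed

lemma chain_dens_pos:
  assumes "0 < pN (x N)" and "\<And>n. n \<in> {1..N} \<Longrightarrow> 0 < s n"
  shows "0 < chain_dens N pN \<mu> s x"
  unfolding chain_dens_def using assms by (intro mult_pos_pos prod_pos gauss_iso_pos) auto

lemma ln_chain_dens:
  fixes x :: "nat \<Rightarrow> real^'d"
  assumes pN: "0 < pN (x N)" and s: "\<And>n. n \<in> {1..N} \<Longrightarrow> 0 < s n"
  shows "ln (chain_dens N pN \<mu> s x) = ln (pN (x N)) - (\<Sum>n\<in>{1..N}. real CARD('d) / 2 * ln (2 * pi * s n))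
      - (\<Sum>n\<in>{1..N}. (\<Sum>i\<in>UNIV. (x (n - 1) $ i - \<mu> n (x n) $ i)\<^sup>2) / (2 * s n))"
proof -
  have gauss_pos: "0 < gauss_iso (\<mu> n (x n)) (s n) (x (n - 1))" if "n \<in> {1..N}" for n
    using gauss_iso_pos[OF s[OF that]] .
  have "ln (chain_dens N pN \<mu> s x)
      = ln (pN (x N)) + (\<Sum>n\<in>{1..N}. ln (gauss_iso (\<mu> n (x n)) (s n) (x (n - 1))))"
    unfolding chain_dens_def using pN gauss_pos
    by (subst ln_mult) (auto intro!: prod_pos ln_prod simp: less_imp_neq[symmetric])
  also have "\<dots> = ln (pN (x N)) + (\<Sum>n\<in>{1..N}. - (real CARD('d) / 2 * ln (2 * pi * s n))
      - (\<Sum>i\<in>UNIV. (x (n - 1) $ i - \<mu> n (x n) $ i)\<^sup>2) / (2 * s n))"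
    using s by (simp add: ln_gauss_iso)
  finally show ?thesis
    by (simp add: sum_subtractf sum_negf)
qed

lemma gaussian_entropy_le_cross_entropy:
  assumes "0 < s" "0 < t" "0 \<le> (d::real)"
  shows "d / 2 * ln (2 * pi * t) + d / 2 \<le> d / 2 * ln (2 * pi * s) + d * t / (2 * s)"
proof -
  have "ln (t / s) \<le> t / s - 1" by (rule ln_le_minus_one) (use assms in auto)
  then have "ln (2 * pi * t) + 1 \<le> ln (2 * pi * s) + t / s"
    using assms by (simp add: ln_div ln_mult)
  then have "d / 2 * (ln (2 * pi * t) + 1) \<le> d / 2 * (ln (2 * pi * s) + t / s)"
    by (rule mult_left_mono) (use assms in simp)
  then show ?thesis by (simp add: algebra_simps)
qed

section \<open>Marginals of a density on the path space\<close>

lemma product_sigma_finite_lborel: "product_sigma_finite (\<lambda>_. lborel :: 'a::euclidean_space measure)"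
  by (intro product_sigma_finite.intro lborel.sigma_finite_measure_axioms)

lemma sigma_finite_PiM_lborel:
  assumes "finite I"
  shows "sigma_finite_measure (PiM I (\<lambda>_. lborel :: 'a::euclidean_space measure))"
proof -
  interpret finite_product_sigma_finite "\<lambda>_. lborel :: 'a measure" I
    by (intro finite_product_sigma_finite.intro finite_product_sigma_finite_axioms.intro
        product_sigma_finite_lborel assms)
  show ?thesis by (rule sigma_finite_measure_axioms)
qed

lemma fun_upd_in_space_PiM_lborel:
  "x \<in> space (PiM (I - {i}) (\<lambda>_. lborel)) \<Longrightarrow> i \<in> I \<Longrightarrow> x(i := y) \<in> space (PiM I (\<lambda>_. lborel))"
  by (auto simp: space_PiM PiE_iff extensional_def)

lemma nn_integral_PiM_lborel_split:
  fixes G :: "('i \<Rightarrow> 'a::euclidean_space) \<Rightarrow> ennreal"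
  assumes "finite I" "i \<in> I" "G \<in> borel_measurable (PiM I (\<lambda>_. lborel))"
  shows "(\<integral>\<^sup>+ x. G x \<partial>PiM I (\<lambda>_. lborel))
    = (\<integral>\<^sup>+ y. \<integral>\<^sup>+ x. G (x(i := y)) \<partial>PiM (I - {i}) (\<lambda>_. lborel) \<partial>lborel)"
proof -
  have I: "insert i (I - {i}) = I" using assms(2) by (rule insert_Diff)
  show ?thesis
    using product_sigma_finite.product_nn_integral_insert_rev[OF product_sigma_finite_lborel, of "I - {i}" i G] assms
    unfolding I by simp
qed

lemma measurable_fun_upd_PiM_lborel:
  "i \<in> I \<Longrightarrow> (\<lambda>x. x(i := y)) \<in> measurable (PiM (I - {i}) (\<lambda>_. lborel)) (PiM I (\<lambda>_. lborel))"
  by (rule measurable_fun_upd[where J="I - {i}"]) auto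

lemma nn_integral_PiM_lborel_split2:
  fixes G :: "('i \<Rightarrow> 'a::euclidean_space) \<Rightarrow> ennreal"
  assumes "finite I" "i \<in> I" "j \<in> I" "i \<noteq> j" and G: "G \<in> borel_measurable (PiM I (\<lambda>_. lborel))"
  shows "(\<integral>\<^sup>+ x. G x \<partial>PiM I (\<lambda>_. lborel))
    = (\<integral>\<^sup>+ y. \<integral>\<^sup>+ z. \<integral>\<^sup>+ x. G (x(i := z, j := y)) \<partial>PiM (I - {i, j}) (\<lambda>_. lborel) \<partial>lborel \<partial>lborel)"
proof -
  have "I - {j} - {i} = I - {i, j}" by auto
  moreover have "(\<lambda>x. G (x(j := y))) \<in> borel_measurable (PiM (I - {j}) (\<lambda>_. lborel))" for y
    using measurable_comp[OF measurable_fun_upd_PiM_lborel[OF assms(3)] G] by (simp add: comp_def)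
  ultimately show ?thesis
    using assms by (simp add: nn_integral_PiM_lborel_split[of I j] nn_integral_PiM_lborel_split[of "I - {j}" i])
qed

lemma measurable_path_space_component: "n \<le> N \<Longrightarrow> (\<lambda>x. x n) \<in> measurable (path_space N) borel"
  unfolding path_space_def by (simp add: measurable_component_singleton)

locale path_density =
  fixes N :: nat and q :: "(nat \<Rightarrow> 'a::euclidean_space) \<Rightarrow> real"
  assumes q_meas: "q \<in> borel_measurable (path_space N)"
    and q_nonneg: "\<And>x. x \<in> space (path_space N) \<Longrightarrow> 0 \<le> q x"
    and q_prob: "(\<integral>\<^sup>+ x. ennreal (q x) \<partial>path_space N) = 1"
    and q_moments: "\<And>n. n \<le> N \<Longrightarrow> integrable (path_space N) (\<lambda>x. q x * (norm (x n))\<^sup>2)"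
begin

text \<open>The Bochner integrals in \<^const>\<open>marg1\<close>
  and \<^const>\<open>marg2\<close> are 0 where the integrand is not integrable, so they agree with these
  only where these are finite, which is almost everywhere.\<close>

definition nn_marg1 :: "nat \<Rightarrow> 'a \<Rightarrow> ennreal" where
  "nn_marg1 n b = (\<integral>\<^sup>+ x. ennreal (q (x(n := b))) \<partial>PiM ({0..N} - {n}) (\<lambda>_. lborel))"

definition nn_marg2 :: "nat \<Rightarrow> 'a \<Rightarrow> 'a \<Rightarrow> ennreal" where
  "nn_marg2 n a b = (\<integral>\<^sup>+ x. ennreal (q (x(n - 1 := a, n := b))) \<partial>PiM ({0..N} - {n - 1, n}) (\<lambda>_. lborel))"

lemma q_measurable[measurable]: "q \<in> borel_measurable (PiM {0..N} (\<lambda>_. lborel))"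
  using q_meas by (simp add: path_space_def)

lemma q_fun_upd_measurable:
  assumes "n \<le> N"
  shows "(\<lambda>(b, x). q (x(n := b))) \<in> borel_measurable (lborel \<Otimes>\<^sub>M PiM ({0..N} - {n}) (\<lambda>_. lborel))"
proof -
  have "(\<lambda>p. (snd p)(n := fst p))
      \<in> measurable (lborel \<Otimes>\<^sub>M PiM ({0..N} - {n}) (\<lambda>_. lborel)) (PiM {0..N} (\<lambda>_. lborel :: 'a measure))"
    by (rule measurable_fun_upd[where J="{0..N} - {n}"]) (use assms in auto)
  from measurable_comp[OF this q_measurable] show ?thesis by (simp add: comp_def case_prod_beta')
qed

lemma q_fun_upd2_measurable:
  assumes "1 \<le> n" "n \<le> N"
  shows "(\<lambda>((a, b), x). q (x(n - 1 := a, n := b)))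
    \<in> borel_measurable ((lborel \<Otimes>\<^sub>M lborel) \<Otimes>\<^sub>M PiM ({0..N} - {n - 1, n}) (\<lambda>_. lborel))"
proof -
  let ?M = "(lborel \<Otimes>\<^sub>M lborel) \<Otimes>\<^sub>M PiM ({0..N} - {n - 1, n}) (\<lambda>_. lborel :: 'a measure)"
  have "(\<lambda>p. (snd p)(n - 1 := fst (fst p))) \<in> measurable ?M (PiM ({0..N} - {n}) (\<lambda>_. lborel))"
    by (rule measurable_fun_upd[where J="{0..N} - {n - 1, n}"]) (use assms in auto)
  then have "(\<lambda>p. (snd p)(n - 1 := fst (fst p), n := snd (fst p))) \<in> measurable ?M (PiM {0..N} (\<lambda>_. lborel))"
    by (rule measurable_fun_upd[where J="{0..N} - {n}", rotated]) (use assms in auto)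
  from measurable_comp[OF this q_measurable] show ?thesis by (simp add: comp_def case_prod_beta')
qed

lemma q_fun_upd_nonneg:
  assumes "n \<le> N" "x \<in> space (PiM ({0..N} - {n}) (\<lambda>_. lborel))"
  shows "0 \<le> q (x(n := b))"
  using assms by (intro q_nonneg) (auto simp: path_space_def intro: fun_upd_in_space_PiM_lborel)

lemma q_fun_upd2_nonneg:
  assumes "1 \<le> n" "n \<le> N" "x \<in> space (PiM ({0..N} - {n - 1, n}) (\<lambda>_. lborel))"
  shows "0 \<le> q (x(n - 1 := a, n := b))"
proof -
  have "x(n - 1 := a) \<in> space (PiM ({0..N} - {n}) (\<lambda>_. lborel))"
    using assms by (auto simp: space_PiM PiE_iff extensional_def)
  then show ?thesis by (rule q_fun_upd_nonneg[OF assms(2)])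
qed

lemma q_fun_upd_slice_measurable:
  "n \<le> N \<Longrightarrow> (\<lambda>x. q (x(n := b))) \<in> borel_measurable (PiM ({0..N} - {n}) (\<lambda>_. lborel))"
  using measurable_Pair2[OF q_fun_upd_measurable, of n b] by simp

lemma q_fun_upd2_slice_measurable:
  "1 \<le> n \<Longrightarrow> n \<le> N \<Longrightarrow> (\<lambda>x. q (x(n - 1 := a, n := b))) \<in> borel_measurable (PiM ({0..N} - {n - 1, n}) (\<lambda>_. lborel))"
  using measurable_Pair2[OF q_fun_upd2_measurable, of n "(a, b)"] by (simp add: space_pair_measure)

lemma nn_integral_comp_nn_marg1:
  assumes n: "n \<le> N" and Phi[measurable]: "Phi \<in> borel_measurable lborel"
  shows "(\<integral>\<^sup>+ x. ennreal (q x) * Phi (x n) \<partial>path_space N) = (\<integral>\<^sup>+ b. nn_marg1 n b * Phi b \<partial>lborel)"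
proof -
  have [measurable]: "(\<lambda>x. x n) \<in> measurable (PiM {0..N} (\<lambda>_. lborel)) (lborel :: 'a measure)"
    using n by (intro measurable_component_singleton) auto
  have "(\<lambda>x. ennreal (q x) * Phi (x n)) \<in> borel_measurable (PiM {0..N} (\<lambda>_. lborel))"
    by measurable
  then show ?thesis
    unfolding path_space_def nn_marg1_def using n q_fun_upd_slice_measurable[OF n]
    by (simp add: nn_integral_PiM_lborel_split[of _ n] nn_integral_multc)
qed

lemma nn_integral_comp_nn_marg2:
  assumes n: "1 \<le> n" "n \<le> N" and Psi[measurable]: "case_prod Psi \<in> borel_measurable (lborel \<Otimes>\<^sub>M lborel)"
  shows "(\<integral>\<^sup>+ x. ennreal (q x) * Psi (x (n - 1)) (x n) \<partial>path_space N)
    = (\<integral>\<^sup>+ b. \<integral>\<^sup>+ a. nn_marg2 n a b * Psi a b \<partial>lborel \<partial>lborel)"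
proof -
  have [measurable]: "(\<lambda>x. x (n - 1)) \<in> measurable (PiM {0..N} (\<lambda>_. lborel)) (lborel :: 'a measure)"
    "(\<lambda>x. x n) \<in> measurable (PiM {0..N} (\<lambda>_. lborel)) (lborel :: 'a measure)"
    using n by (auto intro!: measurable_component_singleton)
  have "(\<lambda>x. ennreal (q x) * Psi (x (n - 1)) (x n)) \<in> borel_measurable (PiM {0..N} (\<lambda>_. lborel))"
    by measurable
  moreover have "n - 1 \<noteq> n" using n by simp
  ultimately show ?thesis
    unfolding path_space_def nn_marg2_def using n q_fun_upd2_slice_measurable[OF n]
    by (simp add: nn_integral_PiM_lborel_split2[of _ "n - 1" n] nn_integral_multc)
qed

lemma nn_marg1_eq_nn_integral_nn_marg2:
  assumes n: "1 \<le> n" "n \<le> N"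
  shows "nn_marg1 n b = (\<integral>\<^sup>+ a. nn_marg2 n a b \<partial>lborel)"
proof -
  have I: "{0..N} - {n} - {n - 1} = {0..N} - {n - 1, n}" and "n - 1 \<noteq> n" using n by auto
  moreover have "(\<lambda>x. ennreal (q (x(n := b)))) \<in> borel_measurable (PiM ({0..N} - {n}) (\<lambda>_. lborel))"
    using q_fun_upd_slice_measurable[OF n(2)] by measurable
  ultimately show ?thesis
    using nn_integral_PiM_lborel_split[of "{0..N} - {n}" "n - 1" "\<lambda>x. ennreal (q (x(n := b)))"] n
    unfolding nn_marg1_def nn_marg2_def by simp
qed

lemma q_integrable: "integrable (path_space N) q"
  using q_meas q_nonneg q_prob by (intro integrableI_nonneg) auto

lemma integral_q: "(\<integral> x. q x \<partial>path_space N) = 1"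
  using nn_integral_eq_integral[OF q_integrable] q_nonneg q_prob by simp

lemma marg1_nonneg: "n \<le> N \<Longrightarrow> 0 \<le> marg1 N q n b"
  unfolding marg1_def by (intro integral_nonneg_AE AE_I2 q_fun_upd_nonneg)

lemma marg2_nonneg: "1 \<le> n \<Longrightarrow> n \<le> N \<Longrightarrow> 0 \<le> marg2 N q n a b"
  unfolding marg2_def by (intro integral_nonneg_AE AE_I2 q_fun_upd2_nonneg)

lemma nn_marg1_measurable: "n \<le> N \<Longrightarrow> nn_marg1 n \<in> borel_measurable lborel"
  unfolding nn_marg1_def[abs_def] using q_fun_upd_measurable[of n]
  by (intro sigma_finite_measure.borel_measurable_nn_integral[OF sigma_finite_PiM_lborel]) auto

lemma marg1_measurable: "n \<le> N \<Longrightarrow> marg1 N q n \<in> borel_measurable lborel"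
  unfolding marg1_def[abs_def] using q_fun_upd_measurable[of n]
  by (intro sigma_finite_measure.borel_measurable_lebesgue_integral[OF sigma_finite_PiM_lborel]) auto

lemma nn_marg2_measurable:
  "1 \<le> n \<Longrightarrow> n \<le> N \<Longrightarrow> case_prod (nn_marg2 n) \<in> borel_measurable (lborel \<Otimes>\<^sub>M lborel)"
  unfolding nn_marg2_def case_prod_beta' using q_fun_upd2_measurable[of n]
  by (intro sigma_finite_measure.borel_measurable_nn_integral[OF sigma_finite_PiM_lborel])
    (auto simp: case_prod_beta')

lemma marg2_measurable:
  "1 \<le> n \<Longrightarrow> n \<le> N \<Longrightarrow> case_prod (marg2 N q n) \<in> borel_measurable (lborel \<Otimes>\<^sub>M lborel)"
  unfolding marg2_def case_prod_beta' using q_fun_upd2_measurable[of n]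
  by (intro sigma_finite_measure.borel_measurable_lebesgue_integral[OF sigma_finite_PiM_lborel])
    (auto simp: case_prod_beta')

lemma nn_integral_nn_marg1: "n \<le> N \<Longrightarrow> (\<integral>\<^sup>+ b. nn_marg1 n b \<partial>lborel) = 1"
  using nn_integral_comp_nn_marg1[of n "\<lambda>_. 1"] q_prob by simp

lemma nn_marg1_eq_marg1:
  assumes "n \<le> N" "nn_marg1 n b \<noteq> \<infinity>"
  shows "nn_marg1 n b = ennreal (marg1 N q n b)"
  using assms q_fun_upd_slice_measurable q_fun_upd_nonneg unfolding nn_marg1_def marg1_def
  by (intro nn_integral_eq_integral_if_finite) auto

lemma AE_nn_marg1_finite: "n \<le> N \<Longrightarrow> AE b in lborel. nn_marg1 n b \<noteq> \<infinity>"
  by (intro nn_integral_PInf_AE nn_marg1_measurable) (simp_all add: nn_integral_nn_marg1)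

lemma AE_nn_marg1_eq_marg1:
  assumes "n \<le> N"
  shows "AE b in lborel. nn_marg1 n b = ennreal (marg1 N q n b)"
  using AE_nn_marg1_finite[OF assms] by eventually_elim (rule nn_marg1_eq_marg1[OF assms])

lemma nn_integral_comp_marg1:
  assumes "n \<le> N" and "Phi \<in> borel_measurable lborel"
  shows "(\<integral>\<^sup>+ x. ennreal (q x) * Phi (x n) \<partial>path_space N) = (\<integral>\<^sup>+ b. ennreal (marg1 N q n b) * Phi b \<partial>lborel)"
  unfolding nn_integral_comp_nn_marg1[OF assms]
  by (intro nn_integral_cong_AE) (use AE_nn_marg1_eq_marg1[OF assms(1)] in eventually_elim, simp)

lemma nn_integral_marg1_eq_1: "n \<le> N \<Longrightarrow> (\<integral>\<^sup>+ b. ennreal (marg1 N q n b) \<partial>lborel) = 1"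
  using nn_integral_comp_marg1[of n "\<lambda>_. 1"] q_prob by simp

lemma not_AE_marg1_eq_0:
  assumes "n \<le> N"
  shows "\<not> (AE b in lborel. marg1 N q n b = 0)"
proof
  assume "AE b in lborel. marg1 N q n b = 0"
  then have "AE b in lborel. ennreal (marg1 N q n b) = 0" by eventually_elim simp
  then have "(\<integral>\<^sup>+ b. ennreal (marg1 N q n b) \<partial>lborel) = (\<integral>\<^sup>+ b. 0 \<partial>(lborel :: 'a measure))"
    by (rule nn_integral_cong_AE)
  then show False using nn_integral_marg1_eq_1[OF assms] by simp
qed

lemma nn_integral_second_moment_finite:
  assumes "n \<le> N"
  shows "(\<integral>\<^sup>+ x. ennreal (q x) * ennreal (1 + (norm (x n))\<^sup>2) \<partial>path_space N) \<noteq> \<infinity>"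
proof -
  have int: "integrable (path_space N) (\<lambda>x. q x + q x * (norm (x n))\<^sup>2)"
    using q_integrable q_moments[OF assms] by auto
  have "(\<integral>\<^sup>+ x. ennreal (q x) * ennreal (1 + (norm (x n))\<^sup>2) \<partial>path_space N)
      = (\<integral>\<^sup>+ x. ennreal (q x + q x * (norm (x n))\<^sup>2) \<partial>path_space N)"
    by (intro nn_integral_cong) (simp add: q_nonneg ennreal_mult'[symmetric] algebra_simps)
  also have "\<dots> = ennreal (\<integral> x. q x + q x * (norm (x n))\<^sup>2 \<partial>path_space N)"
    using q_nonneg by (intro nn_integral_eq_integral[OF int] AE_I2) simp
  finally show ?thesis by simp
qed

text \<open>On a regular fibre x_n = b the conditional law of x_(n-1) has finite mass and finite second
  moment, as the bias-variance decomposition needs.\<close>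

definition regular_fibre :: "nat \<Rightarrow> 'a \<Rightarrow> bool" where
  "regular_fibre n b \<longleftrightarrow> nn_marg1 n b \<noteq> \<infinity>
     \<and> (\<integral>\<^sup>+ a. nn_marg2 n a b * ennreal (1 + (norm a)\<^sup>2) \<partial>lborel) \<noteq> \<infinity>"

lemma AE_regular_fibre:
  assumes n: "1 \<le> n" "n \<le> N"
  shows "AE b in lborel. regular_fibre n b"
proof -
  note [measurable] = nn_marg2_measurable[OF n]
  have "(\<integral>\<^sup>+ b. \<integral>\<^sup>+ a. nn_marg2 n a b * ennreal (1 + (norm a)\<^sup>2) \<partial>lborel \<partial>lborel) \<noteq> \<infinity>"
    using nn_integral_second_moment_finite[of "n - 1"] nn_integral_comp_nn_marg2[OF n, of "\<lambda>a b. ennreal (1 + (norm a)\<^sup>2)"] n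
    by (simp add: case_prod_beta')
  then have "AE b in lborel. (\<integral>\<^sup>+ a. nn_marg2 n a b * ennreal (1 + (norm a)\<^sup>2) \<partial>lborel) \<noteq> \<infinity>"
    by (intro nn_integral_PInf_AE) measurable
  with AE_nn_marg1_finite[OF n(2)] show ?thesis
    unfolding regular_fibre_def by eventually_elim auto
qed

lemma regular_fibre_AE_nn_marg2_eq:
  assumes n: "1 \<le> n" "n \<le> N" and b: "regular_fibre n b"
  shows "AE a in lborel. nn_marg2 n a b = ennreal (marg2 N q n a b)"
proof -
  note [measurable] = nn_marg2_measurable[OF n]
  have "AE a in lborel. nn_marg2 n a b \<noteq> \<infinity>"
    using b by (intro nn_integral_PInf_AE)
      (simp_all add: regular_fibre_def nn_marg1_eq_nn_integral_nn_marg2[OF n, symmetric])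
  then show ?thesis
    by eventually_elim (use n q_fun_upd2_slice_measurable q_fun_upd2_nonneg in
        \<open>auto simp: nn_marg2_def marg2_def intro!: nn_integral_eq_integral_if_finite\<close>)
qed

lemma regular_fibre_integrable:
  assumes n: "1 \<le> n" "n \<le> N" and b: "regular_fibre n b"
  shows "integrable lborel (\<lambda>a. marg2 N q n a b)"
    and "integrable lborel (\<lambda>a. marg2 N q n a b * (norm a)\<^sup>2)"
    and "marg1 N q n b = (\<integral> a. marg2 N q n a b \<partial>lborel)"
proof -
  note [measurable] = marg2_measurable[OF n]
  note nonneg = marg2_nonneg[OF n]
  have AE_eq: "AE a in lborel. nn_marg2 n a b = ennreal (marg2 N q n a b)"
    by (rule regular_fibre_AE_nn_marg2_eq[OF n b])
  have "(\<integral>\<^sup>+ a. ennreal (marg2 N q n a b * (1 + (norm a)\<^sup>2)) \<partial>lborel)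
      = (\<integral>\<^sup>+ a. nn_marg2 n a b * ennreal (1 + (norm a)\<^sup>2) \<partial>lborel)"
    using AE_eq by (intro nn_integral_cong_AE) (auto simp: ennreal_mult' nonneg)
  then have moment: "integrable lborel (\<lambda>a. marg2 N q n a b * (1 + (norm a)\<^sup>2))"
    using b by (intro integrableI_nonneg) (auto simp: regular_fibre_def nonneg less_top)
  have bounds: "marg2 N q n a b \<le> marg2 N q n a b * (1 + (norm a)\<^sup>2)"
    "marg2 N q n a b * (norm a)\<^sup>2 \<le> marg2 N q n a b * (1 + (norm a)\<^sup>2)" for a
    using mult_left_mono[of 1 "1 + (norm a)\<^sup>2" "marg2 N q n a b"] nonneg by (simp_all add: algebra_simps)
  show mass: "integrable lborel (\<lambda>a. marg2 N q n a b)"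
    using bounds by (intro Bochner_Integration.integrable_bound[OF moment]) (auto simp: nonneg)
  show "integrable lborel (\<lambda>a. marg2 N q n a b * (norm a)\<^sup>2)"
    using bounds by (intro Bochner_Integration.integrable_bound[OF moment]) (auto simp: nonneg)
  have "ennreal (marg1 N q n b) = (\<integral>\<^sup>+ a. nn_marg2 n a b \<partial>lborel)"
    using b n nn_marg1_eq_marg1 nn_marg1_eq_nn_integral_nn_marg2 by (simp add: regular_fibre_def)
  also have "\<dots> = (\<integral>\<^sup>+ a. ennreal (marg2 N q n a b) \<partial>lborel)"
    using AE_eq by (rule nn_integral_cong_AE)
  also have "\<dots> = ennreal (\<integral> a. marg2 N q n a b \<partial>lborel)"
    using mass by (intro nn_integral_eq_integral) (auto simp: nonneg)
  finally show "marg1 N q n b = (\<integral> a. marg2 N q n a b \<partial>lborel)"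
    using marg1_nonneg[OF n(2)] nonneg by (simp add: ennreal_inj integral_nonneg)
qed

end

section \<open>The optimal Gaussian transitions\<close>

locale path_density_cart = path_density N q for N and q :: "(nat \<Rightarrow> real^'d) \<Rightarrow> real"
begin

lemma regular_fibre_sq_dist:
  assumes n: "1 \<le> n" "n \<le> N" and b: "regular_fibre n b"
  shows "integrable lborel (\<lambda>a. marg2 N q n a b * (\<Sum>i\<in>UNIV. (a $ i - c $ i)\<^sup>2))"
    and "(\<integral> a. marg2 N q n a b * (\<Sum>i\<in>UNIV. (a $ i - c $ i)\<^sup>2) \<partial>lborel)
      = marg1 N q n b * cond_trace_cov N q n b + marg1 N q n b * (\<Sum>i\<in>UNIV. (opt_mean N q n b $ i - c $ i)\<^sup>2)"
  using weighted_sq_dist_decomp[of "\<lambda>a. marg2 N q n a b", OF marg2_nonneg[OF n] regular_fibre_integrable(1,2)[OF n b]]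
  unfolding cond_trace_cov_def opt_mean_def cond_dens_def regular_fibre_integrable(3)[OF n b] by simp_all

lemma opt_mean_measurable:
  assumes n: "1 \<le> n" "n \<le> N"
  shows "opt_mean N q n \<in> borel_measurable borel"
proof -
  note [measurable] = marg1_measurable[OF n(2)] marg2_measurable[OF n]
  have "opt_mean N q n \<in> borel_measurable lborel"
    unfolding opt_mean_def[abs_def] cond_dens_def
    by (rule lborel.borel_measurable_lebesgue_integral) measurable
  then show ?thesis by simp
qed

lemma cond_trace_cov_measurable:
  assumes n: "1 \<le> n" "n \<le> N"
  shows "cond_trace_cov N q n \<in> borel_measurable lborel"
proof -
  note [measurable] = marg1_measurable[OF n(2)] marg2_measurable[OF n] opt_mean_measurable[OF n]
  show ?thesis
    unfolding cond_trace_cov_def[abs_def] cond_dens_def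
    by (intro borel_measurable_sum lborel.borel_measurable_lebesgue_integral) measurable
qed

lemma cond_trace_cov_nonneg: "1 \<le> n \<Longrightarrow> n \<le> N \<Longrightarrow> 0 \<le> cond_trace_cov N q n b"
  unfolding cond_trace_cov_def cond_dens_def
  by (intro sum_nonneg integral_nonneg_AE AE_I2 mult_nonneg_nonneg divide_nonneg_nonneg marg2_nonneg marg1_nonneg) auto

lemma nn_integral_sq_error:
  assumes n: "1 \<le> n" "n \<le> N" and \<mu>: "\<mu> \<in> borel_measurable borel"
  shows "(\<integral>\<^sup>+ x. ennreal (q x * (\<Sum>i\<in>UNIV. (x (n - 1) $ i - \<mu> (x n) $ i)\<^sup>2)) \<partial>path_space N)
    = (\<integral>\<^sup>+ b. ennreal (marg1 N q n b * cond_trace_cov N q n b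
        + marg1 N q n b * (\<Sum>i\<in>UNIV. (opt_mean N q n b $ i - \<mu> b $ i)\<^sup>2)) \<partial>lborel)"
proof -
  have [measurable]: "(\<lambda>(a, b). ennreal (\<Sum>i\<in>UNIV. (a $ i - \<mu> b $ i)\<^sup>2)) \<in> borel_measurable (lborel \<Otimes>\<^sub>M lborel)"
    using \<mu> by measurable
  have fibre: "(\<integral>\<^sup>+ a. nn_marg2 n a b * ennreal (\<Sum>i\<in>UNIV. (a $ i - \<mu> b $ i)\<^sup>2) \<partial>lborel)
      = ennreal (marg1 N q n b * cond_trace_cov N q n b
        + marg1 N q n b * (\<Sum>i\<in>UNIV. (opt_mean N q n b $ i - \<mu> b $ i)\<^sup>2))"
    if b: "regular_fibre n b" for b
  proof -
    note decomp = regular_fibre_sq_dist[OF n b, of "\<mu> b"]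
    have "(\<integral>\<^sup>+ a. nn_marg2 n a b * ennreal (\<Sum>i\<in>UNIV. (a $ i - \<mu> b $ i)\<^sup>2) \<partial>lborel)
        = (\<integral>\<^sup>+ a. ennreal (marg2 N q n a b * (\<Sum>i\<in>UNIV. (a $ i - \<mu> b $ i)\<^sup>2)) \<partial>lborel)"
      using regular_fibre_AE_nn_marg2_eq[OF n b]
      by (intro nn_integral_cong_AE) (auto simp: ennreal_mult' marg2_nonneg[OF n])
    also have "\<dots> = ennreal (\<integral> a. marg2 N q n a b * (\<Sum>i\<in>UNIV. (a $ i - \<mu> b $ i)\<^sup>2) \<partial>lborel)"
      by (intro nn_integral_eq_integral[OF decomp(1)] AE_I2 mult_nonneg_nonneg sum_nonneg marg2_nonneg[OF n]) simp
    finally show ?thesis unfolding decomp(2) .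
  qed
  have "(\<integral>\<^sup>+ x. ennreal (q x * (\<Sum>i\<in>UNIV. (x (n - 1) $ i - \<mu> (x n) $ i)\<^sup>2)) \<partial>path_space N)
      = (\<integral>\<^sup>+ x. ennreal (q x) * ennreal (\<Sum>i\<in>UNIV. (x (n - 1) $ i - \<mu> (x n) $ i)\<^sup>2) \<partial>path_space N)"
    by (intro nn_integral_cong) (simp add: ennreal_mult' q_nonneg)
  also have "\<dots> = (\<integral>\<^sup>+ b. \<integral>\<^sup>+ a. nn_marg2 n a b * ennreal (\<Sum>i\<in>UNIV. (a $ i - \<mu> b $ i)\<^sup>2) \<partial>lborel \<partial>lborel)"
    by (rule nn_integral_comp_nn_marg2[OF n]) simp
  also have "\<dots> = (\<integral>\<^sup>+ b. ennreal (marg1 N q n b * cond_trace_cov N q n b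
        + marg1 N q n b * (\<Sum>i\<in>UNIV. (opt_mean N q n b $ i - \<mu> b $ i)\<^sup>2)) \<partial>lborel)"
    using AE_regular_fibre[OF n] fibre by (intro nn_integral_cong_AE) (auto elim: AE_mp)
  finally show ?thesis .
qed

lemma nn_integral_trace_cov_le:
  assumes n: "1 \<le> n" "n \<le> N" and \<mu>: "\<mu> \<in> borel_measurable borel"
  shows "(\<integral>\<^sup>+ b. ennreal (marg1 N q n b * cond_trace_cov N q n b) \<partial>lborel)
    \<le> (\<integral>\<^sup>+ x. ennreal (q x * (\<Sum>i\<in>UNIV. (x (n - 1) $ i - \<mu> (x n) $ i)\<^sup>2)) \<partial>path_space N)"
  unfolding nn_integral_sq_error[OF n \<mu>]
  by (intro nn_integral_mono ennreal_leI) (auto intro!: mult_nonneg_nonneg sum_nonneg marg1_nonneg n)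

lemma integrable_trace_cov:
  assumes n: "1 \<le> n" "n \<le> N"
  shows "integrable lborel (\<lambda>b. marg1 N q n b * cond_trace_cov N q n b)"
    and "(\<integral>\<^sup>+ b. ennreal (marg1 N q n b * cond_trace_cov N q n b) \<partial>lborel)
      = ennreal (\<integral> b. marg1 N q n b * cond_trace_cov N q n b \<partial>lborel)"
proof -
  have "(\<integral>\<^sup>+ b. ennreal (marg1 N q n b * cond_trace_cov N q n b) \<partial>lborel)
      \<le> (\<integral>\<^sup>+ x. ennreal (q x * (\<Sum>i\<in>UNIV. (x (n - 1) $ i - 0 $ i)\<^sup>2)) \<partial>path_space N)"
    using nn_integral_trace_cov_le[OF n, of "\<lambda>_. 0"] by simp
  also have "\<dots> \<le> (\<integral>\<^sup>+ x. ennreal (q x) * ennreal (1 + (norm (x (n - 1)))\<^sup>2) \<partial>path_space N)"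
    by (intro nn_integral_mono)
      (auto simp: q_nonneg power2_norm_vec ennreal_mult'[symmetric] intro!: ennreal_leI mult_left_mono)
  also have "\<dots> < \<infinity>"
    using nn_integral_second_moment_finite[of "n - 1"] n by (simp add: less_top)
  finally have finite: "(\<integral>\<^sup>+ b. ennreal (marg1 N q n b * cond_trace_cov N q n b) \<partial>lborel) < \<infinity>" .
  have [measurable]: "(\<lambda>b. marg1 N q n b * cond_trace_cov N q n b) \<in> borel_measurable lborel"
    using marg1_measurable[OF n(2)] cond_trace_cov_measurable[OF n] by measurable
  have nonneg: "0 \<le> marg1 N q n b * cond_trace_cov N q n b" for b
    using marg1_nonneg[OF n(2)] cond_trace_cov_nonneg[OF n] by simp
  show "integrable lborel (\<lambda>b. marg1 N q n b * cond_trace_cov N q n b)"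
    using finite nonneg by (intro integrableI_nonneg) auto
  then show "(\<integral>\<^sup>+ b. ennreal (marg1 N q n b * cond_trace_cov N q n b) \<partial>lborel)
      = ennreal (\<integral> b. marg1 N q n b * cond_trace_cov N q n b \<partial>lborel)"
    using nonneg by (intro nn_integral_eq_integral) auto
qed

lemma opt_var_eq:
  "opt_var N q n = (\<integral> b. marg1 N q n b * cond_trace_cov N q n b \<partial>lborel) / real CARD('d)"
  unfolding opt_var_def by simp

lemma nn_integral_sq_error_ge:
  assumes n: "1 \<le> n" "n \<le> N" and \<mu>: "\<mu> \<in> borel_measurable borel"
  shows "ennreal (real CARD('d) * opt_var N q n)
    \<le> (\<integral>\<^sup>+ x. ennreal (q x * (\<Sum>i\<in>UNIV. (x (n - 1) $ i - \<mu> (x n) $ i)\<^sup>2)) \<partial>path_space N)"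
  using nn_integral_trace_cov_le[OF n \<mu>] unfolding opt_var_eq integrable_trace_cov(2)[OF n] by simp

lemma nn_integral_sq_error_opt_mean:
  assumes n: "1 \<le> n" "n \<le> N"
  shows "(\<integral>\<^sup>+ x. ennreal (q x * (\<Sum>i\<in>UNIV. (x (n - 1) $ i - opt_mean N q n (x n) $ i)\<^sup>2)) \<partial>path_space N)
    = ennreal (real CARD('d) * opt_var N q n)"
  unfolding nn_integral_sq_error[OF n opt_mean_measurable[OF n]] opt_var_eq
  by (simp add: integrable_trace_cov(2)[OF n])

lemma AE_marg1_eq_0_or_trace_cov_pos:
  assumes n: "1 \<le> n" "n \<le> N"
  shows "AE b in lborel. marg1 N q n b = 0 \<or> 0 < marg1 N q n b * cond_trace_cov N q n b"
  using AE_regular_fibre[OF n]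
proof eventually_elim
  case (elim b)
  note decomp = regular_fibre_sq_dist[OF n elim, of "opt_mean N q n b"]
  have "0 < marg1 N q n b \<Longrightarrow> 0 < (\<integral> a. marg2 N q n a b * (\<Sum>i\<in>UNIV. (a $ i - opt_mean N q n b $ i)\<^sup>2) \<partial>lborel)"
    by (intro weighted_sq_dist_pos marg2_nonneg[OF n] decomp(1))
      (simp add: regular_fibre_integrable(3)[OF n elim])
  then show ?case
    using marg1_nonneg[OF n(2), of b] unfolding decomp(2) by (cases "marg1 N q n b = 0") auto
qed

lemma opt_var_pos:
  assumes n: "1 \<le> n" "n \<le> N"
  shows "0 < opt_var N q n"
proof -
  have nonneg: "0 \<le> marg1 N q n b * cond_trace_cov N q n b" for b
    using marg1_nonneg[OF n(2)] cond_trace_cov_nonneg[OF n] by simp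
  have "\<not> (AE b in lborel. marg1 N q n b * cond_trace_cov N q n b = 0)"
  proof
    assume "AE b in lborel. marg1 N q n b * cond_trace_cov N q n b = 0"
    with AE_marg1_eq_0_or_trace_cov_pos[OF n] have "AE b in lborel. marg1 N q n b = 0"
      by eventually_elim auto
    with not_AE_marg1_eq_0[OF n(2)] show False ..
  qed
  then have "(\<integral> b. marg1 N q n b * cond_trace_cov N q n b \<partial>lborel) \<noteq> 0"
    using integral_nonneg_eq_0_iff_AE[OF integrable_trace_cov(1)[OF n]] nonneg by auto
  moreover have "0 \<le> (\<integral> b. marg1 N q n b * cond_trace_cov N q n b \<partial>lborel)"
    using nonneg by (simp add: integral_nonneg_AE)
  ultimately show ?thesis unfolding opt_var_eq by simp
qed

end

section \<open>The divergence from a Gaussian chain\<close>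

lemma e2ennreal_cross_term:
  assumes "0 \<le> r"
  shows "e2ennreal (if r \<le> 0 then 0 else if p \<le> 0 then \<infinity> else ereal (- r * ln p))
    = ennreal r * (if p \<le> 0 then \<infinity> else ennreal (- ln p))"
  using assms by (cases "r = 0"; cases "p \<le> 0") (simp_all add: ennreal_mult_top ennreal_mult'[symmetric])

lemma e2ennreal_uminus_cross_term:
  assumes "0 \<le> r"
  shows "e2ennreal (- (if r \<le> 0 then 0 else if p \<le> 0 then \<infinity> else ereal (- r * ln p)))
    = ennreal r * (if p \<le> 0 then 0 else ennreal (ln p))"
  using assms by (cases "r = 0"; cases "p \<le> 0") (simp_all add: e2ennreal_neg ennreal_mult'[symmetric])

locale gaussian_chain_fit = path_density_cart N q for N and q :: "(nat \<Rightarrow> real^'d) \<Rightarrow> real" +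
  fixes pN :: "real^'d \<Rightarrow> real"
  assumes pN_meas: "pN \<in> borel_measurable lborel"
    and pN_nonneg: "\<And>y. 0 \<le> pN y"
    and q_entropy: "integrable (path_space N) (\<lambda>x. q x * ln (q x))"
begin

definition cross_integrand :: "(nat \<Rightarrow> real^'d) \<Rightarrow> ereal" where
  "cross_integrand x = (if q x \<le> 0 then 0 else if pN (x N) \<le> 0 then \<infinity> else ereal (- q x * ln (pN (x N))))"

definition entropy_integrand :: "(nat \<Rightarrow> real) \<Rightarrow> (nat \<Rightarrow> real^'d) \<Rightarrow> real" where
  "entropy_integrand s x = q x * ln (q x) + q x * (\<Sum>n\<in>{1..N}. real CARD('d) / 2 * ln (2 * pi * s n))"

definition error_integrand :: "(nat \<Rightarrow> real^'d \<Rightarrow> real^'d) \<Rightarrow> (nat \<Rightarrow> real) \<Rightarrow> (nat \<Rightarrow> real^'d) \<Rightarrow> real" where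
  "error_integrand \<mu> s x = (\<Sum>n\<in>{1..N}. q x * (\<Sum>i\<in>UNIV. (x (n - 1) $ i - \<mu> n (x n) $ i)\<^sup>2) / (2 * s n))"

lemma KL_integrand_split:
  assumes x: "x \<in> space (path_space N)" and s: "\<And>n. n \<in> {1..N} \<Longrightarrow> 0 < s n"
  shows "(if q x \<le> 0 then 0 else if chain_dens N pN \<mu> s x \<le> 0 then \<infinity>
      else ereal (q x * ln (q x / chain_dens N pN \<mu> s x)))
    = cross_integrand x + ereal (entropy_integrand s x) + ereal (error_integrand \<mu> s x)"
proof (cases "0 < q x \<and> 0 < pN (x N)")
  case True
  have pos: "0 < chain_dens N pN \<mu> s x"
    by (rule chain_dens_pos) (use True s in auto)
  have ln_p: "ln (chain_dens N pN \<mu> s x) = ln (pN (x N)) - (\<Sum>n\<in>{1..N}. real CARD('d) / 2 * ln (2 * pi * s n))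
      - (\<Sum>n\<in>{1..N}. (\<Sum>i\<in>UNIV. (x (n - 1) $ i - \<mu> n (x n) $ i)\<^sup>2) / (2 * s n))"
    by (rule ln_chain_dens) (use True s in auto)
  have "q x * ln (q x / chain_dens N pN \<mu> s x) = q x * (ln (q x) - ln (chain_dens N pN \<mu> s x))"
    using True pos by (simp add: ln_div)
  also have "\<dots> = - q x * ln (pN (x N)) + entropy_integrand s x + error_integrand \<mu> s x"
    unfolding ln_p entropy_integrand_def error_integrand_def
    by (simp add: sum_distrib_left sum_divide_distrib algebra_simps)
  finally show ?thesis
    using True pos by (simp add: cross_integrand_def)
next
  case False
  then have "q x = 0 \<or> (0 < q x \<and> chain_dens N pN \<mu> s x = 0 \<and> pN (x N) = 0)"
    using q_nonneg[OF x] pN_nonneg[of "x N"] by (auto simp: chain_dens_def)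
  then show ?thesis
    by (auto simp: cross_integrand_def entropy_integrand_def error_integrand_def)
qed

lemma KL_dens_chain_eq:
  assumes "\<And>n. n \<in> {1..N} \<Longrightarrow> 0 < s n"
  shows "KL_dens (path_space N) q (chain_dens N pN \<mu> s)
    = eint (path_space N) (\<lambda>x. cross_integrand x + ereal (entropy_integrand s x) + ereal (error_integrand \<mu> s x))"
  unfolding KL_dens_def using assms by (intro eint_cong KL_integrand_split)

lemma cross_integrand_measurable: "cross_integrand \<in> borel_measurable (path_space N)"
proof -
  note [measurable] = measurable_path_space_component[of N, simplified] q_meas pN_meas[simplified]
  show ?thesis unfolding cross_integrand_def[abs_def] by measurable
qed

lemma sq_error_measurable:
  fixes \<mu> :: "real^'d \<Rightarrow> real^'d"
  assumes n: "n \<in> {1..N}" and \<mu>[measurable]: "\<mu> \<in> borel_measurable borel"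
  shows "(\<lambda>x. \<Sum>i\<in>UNIV. (x (n - 1) $ i - \<mu> (x n) $ i)\<^sup>2) \<in> borel_measurable (path_space N)"
proof -
  have [measurable]: "(\<lambda>x. x n) \<in> measurable (path_space N) borel"
    "(\<lambda>x. x (n - 1)) \<in> measurable (path_space N) borel"
    using n by (auto intro!: measurable_path_space_component)
  show ?thesis by measurable
qed

lemma error_integrand_measurable:
  assumes "\<And>n. n \<in> {1..N} \<Longrightarrow> \<mu> n \<in> borel_measurable borel"
  shows "error_integrand \<mu> s \<in> borel_measurable (path_space N)"
  unfolding error_integrand_def[abs_def]
proof (intro borel_measurable_sum)
  fix n assume "n \<in> {1..N}"
  note [measurable] = sq_error_measurable[OF this assms[OF this]] q_meas
  show "(\<lambda>x. q x * (\<Sum>i\<in>UNIV. (x (n - 1) $ i - \<mu> n (x n) $ i)\<^sup>2) / (2 * s n)) \<in> borel_measurable (path_space N)"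
    by measurable
qed

lemma eint_cross_integrand: "eint (path_space N) cross_integrand = cross_entropy_dens lborel (marg1 N q N) pN"
proof -
  define PhiP where "PhiP b = (if pN b \<le> 0 then \<infinity> else ennreal (- ln (pN b)))" for b
  define PhiN where "PhiN b = (if pN b \<le> 0 then 0 else ennreal (ln (pN b)))" for b
  note [measurable] = pN_meas
  have PhiP_meas: "PhiP \<in> borel_measurable lborel" and PhiN_meas: "PhiN \<in> borel_measurable lborel"
    unfolding PhiP_def[abs_def] PhiN_def[abs_def] by measurable
  have "eint_pos (path_space N) cross_integrand = (\<integral>\<^sup>+ x. ennreal (q x) * PhiP (x N) \<partial>path_space N)"
    unfolding eint_pos_def cross_integrand_def PhiP_def
    by (intro nn_integral_cong e2ennreal_cross_term q_nonneg)
  also have "\<dots> = (\<integral>\<^sup>+ b. ennreal (marg1 N q N b) * PhiP b \<partial>lborel)"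
    by (rule nn_integral_comp_marg1[OF order_refl PhiP_meas])
  also have "\<dots> = eint_pos lborel (\<lambda>b. if marg1 N q N b \<le> 0 then 0 else if pN b \<le> 0 then \<infinity>
      else ereal (- marg1 N q N b * ln (pN b)))"
    unfolding eint_pos_def PhiP_def
    by (intro nn_integral_cong e2ennreal_cross_term[symmetric] marg1_nonneg order_refl)
  finally have pos: "eint_pos (path_space N) cross_integrand = \<dots>" .
  have "eint_neg (path_space N) cross_integrand = (\<integral>\<^sup>+ x. ennreal (q x) * PhiN (x N) \<partial>path_space N)"
    unfolding eint_neg_def cross_integrand_def PhiN_def
    by (intro nn_integral_cong e2ennreal_uminus_cross_term q_nonneg)
  also have "\<dots> = (\<integral>\<^sup>+ b. ennreal (marg1 N q N b) * PhiN b \<partial>lborel)"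
    by (rule nn_integral_comp_marg1[OF order_refl PhiN_meas])
  also have "\<dots> = eint_neg lborel (\<lambda>b. if marg1 N q N b \<le> 0 then 0 else if pN b \<le> 0 then \<infinity>
      else ereal (- marg1 N q N b * ln (pN b)))"
    unfolding eint_neg_def PhiN_def
    by (intro nn_integral_cong e2ennreal_uminus_cross_term[symmetric] marg1_nonneg order_refl)
  finally have neg: "eint_neg (path_space N) cross_integrand = \<dots>" .
  show ?thesis
    unfolding eint_eq_pos_minus_neg cross_entropy_dens_def pos neg ..
qed

lemma entropy_integrand_integrable: "integrable (path_space N) (entropy_integrand s)"
  unfolding entropy_integrand_def[abs_def] using q_entropy q_integrable by simp

lemma integral_entropy_integrand:
  "(\<integral> x. entropy_integrand s x \<partial>path_space N)
    = (\<integral> x. q x * ln (q x) \<partial>path_space N) + (\<Sum>n\<in>{1..N}. real CARD('d) / 2 * ln (2 * pi * s n))"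
  unfolding entropy_integrand_def using q_entropy q_integrable integral_q by simp

lemma sq_error_opt_mean:
  assumes n: "n \<in> {1..N}"
  shows "integrable (path_space N) (\<lambda>x. q x * (\<Sum>i\<in>UNIV. (x (n - 1) $ i - opt_mean N q n (x n) $ i)\<^sup>2))"
    and "(\<integral> x. q x * (\<Sum>i\<in>UNIV. (x (n - 1) $ i - opt_mean N q n (x n) $ i)\<^sup>2) \<partial>path_space N)
      = real CARD('d) * opt_var N q n"
proof -
  have n': "1 \<le> n" "n \<le> N" using n by auto
  have meas: "(\<lambda>x. q x * (\<Sum>i\<in>UNIV. (x (n - 1) $ i - opt_mean N q n (x n) $ i)\<^sup>2)) \<in> borel_measurable (path_space N)"
    using sq_error_measurable[OF n opt_mean_measurable[OF n']] q_meas by measurable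
  have nonneg: "x \<in> space (path_space N) \<Longrightarrow> 0 \<le> q x * (\<Sum>i\<in>UNIV. (x (n - 1) $ i - opt_mean N q n (x n) $ i)\<^sup>2)" for x
    by (simp add: q_nonneg sum_nonneg)
  note nn_eq = nn_integral_sq_error_opt_mean[OF n']
  show int: "integrable (path_space N) (\<lambda>x. q x * (\<Sum>i\<in>UNIV. (x (n - 1) $ i - opt_mean N q n (x n) $ i)\<^sup>2))"
    using nn_eq nonneg by (intro integrableI_nonneg[OF meas]) auto
  have "ennreal (\<integral> x. q x * (\<Sum>i\<in>UNIV. (x (n - 1) $ i - opt_mean N q n (x n) $ i)\<^sup>2) \<partial>path_space N)
      = ennreal (real CARD('d) * opt_var N q n)"
    using nn_integral_eq_integral[OF int] nonneg nn_eq by simp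
  then show "(\<integral> x. q x * (\<Sum>i\<in>UNIV. (x (n - 1) $ i - opt_mean N q n (x n) $ i)\<^sup>2) \<partial>path_space N)
      = real CARD('d) * opt_var N q n"
    using opt_var_pos[OF n'] nonneg by (subst (asm) ennreal_inj) (auto intro: integral_nonneg)
qed

lemma error_integrand_opt:
  shows "integrable (path_space N) (error_integrand (opt_mean N q) (opt_var N q))"
    and "(\<integral> x. error_integrand (opt_mean N q) (opt_var N q) x \<partial>path_space N) = (\<Sum>n\<in>{1..N}. real CARD('d) / 2)"
proof -
  show "integrable (path_space N) (error_integrand (opt_mean N q) (opt_var N q))"
    unfolding error_integrand_def[abs_def] using sq_error_opt_mean(1) by auto
  have "(\<integral> x. error_integrand (opt_mean N q) (opt_var N q) x \<partial>path_space N)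
      = (\<Sum>n\<in>{1..N}. real CARD('d) * opt_var N q n / (2 * opt_var N q n))"
    unfolding error_integrand_def using sq_error_opt_mean by simp
  also have "\<dots> = (\<Sum>n\<in>{1..N}. real CARD('d) / 2)"
    using opt_var_pos by (intro sum.cong) (auto simp: less_imp_neq[symmetric])
  finally show "(\<integral> x. error_integrand (opt_mean N q) (opt_var N q) x \<partial>path_space N) = (\<Sum>n\<in>{1..N}. real CARD('d) / 2)" .
qed

lemma nn_integral_error_integrand_ge:
  assumes \<mu>: "\<And>n. n \<in> {1..N} \<Longrightarrow> \<mu> n \<in> borel_measurable borel" and s: "\<And>n. n \<in> {1..N} \<Longrightarrow> 0 < s n"
  shows "ennreal (\<Sum>n\<in>{1..N}. real CARD('d) * opt_var N q n / (2 * s n))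
    \<le> (\<integral>\<^sup>+ x. ennreal (error_integrand \<mu> s x) \<partial>path_space N)"
proof -
  define S where "S n x = q x * (\<Sum>i\<in>UNIV. (x (n - 1) $ i - \<mu> n (x n) $ i)\<^sup>2)" for n x
  have S_meas: "(\<lambda>x. ennreal (S n x)) \<in> borel_measurable (path_space N)" if "n \<in> {1..N}" for n
    unfolding S_def using sq_error_measurable[OF that \<mu>[OF that]] q_meas by measurable
  have S_nonneg: "0 \<le> S n x" if "x \<in> space (path_space N)" for n x
    unfolding S_def using q_nonneg[OF that] by (simp add: sum_nonneg)
  have "ennreal (\<Sum>n\<in>{1..N}. real CARD('d) * opt_var N q n / (2 * s n))
      = (\<Sum>n\<in>{1..N}. ennreal (real CARD('d) * opt_var N q n / (2 * s n)))"
    using opt_var_pos s by (intro sum_ennreal[symmetric]) (simp add: less_imp_le)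
  also have "\<dots> = (\<Sum>n\<in>{1..N}. ennreal (real CARD('d) * opt_var N q n) * ennreal (1 / (2 * s n)))"
  proof (intro sum.cong refl)
    fix n assume "n \<in> {1..N}"
    then have "0 \<le> real CARD('d) * opt_var N q n" using opt_var_pos[of n] by simp
    then show "ennreal (real CARD('d) * opt_var N q n / (2 * s n))
        = ennreal (real CARD('d) * opt_var N q n) * ennreal (1 / (2 * s n))"
      by (simp add: ennreal_mult'[symmetric])
  qed
  also have "\<dots> \<le> (\<Sum>n\<in>{1..N}. (\<integral>\<^sup>+ x. ennreal (S n x) \<partial>path_space N) * ennreal (1 / (2 * s n)))"
    unfolding S_def by (intro sum_mono mult_right_mono nn_integral_sq_error_ge \<mu>) auto
  also have "\<dots> = (\<Sum>n\<in>{1..N}. \<integral>\<^sup>+ x. ennreal (S n x) * ennreal (1 / (2 * s n)) \<partial>path_space N)"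
    by (intro sum.cong refl nn_integral_multc[symmetric] S_meas)
  also have "\<dots> = (\<integral>\<^sup>+ x. (\<Sum>n\<in>{1..N}. ennreal (S n x) * ennreal (1 / (2 * s n))) \<partial>path_space N)"
    by (rule nn_integral_sum[symmetric]) (use S_meas in measurable)
  also have "\<dots> = (\<integral>\<^sup>+ x. ennreal (error_integrand \<mu> s x) \<partial>path_space N)"
  proof (intro nn_integral_cong)
    fix x :: "nat \<Rightarrow> real^'d" assume x: "x \<in> space (path_space N)"
    have "0 \<le> S n x / (2 * s n)" if "n \<in> {1..N}" for n
      using S_nonneg[OF x] s[OF that] by simp
    then have "(\<Sum>n\<in>{1..N}. ennreal (S n x / (2 * s n))) = ennreal (\<Sum>n\<in>{1..N}. S n x / (2 * s n))"
      by (rule sum_ennreal)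
    then show "(\<Sum>n\<in>{1..N}. ennreal (S n x) * ennreal (1 / (2 * s n))) = ennreal (error_integrand \<mu> s x)"
      unfolding error_integrand_def S_def[symmetric] using S_nonneg[OF x]
      by (simp add: ennreal_mult'[symmetric])
  qed
  finally show ?thesis .
qed

definition opt_integrand :: "(nat \<Rightarrow> real^'d) \<Rightarrow> real" where
  "opt_integrand x = entropy_integrand (opt_var N q) x + error_integrand (opt_mean N q) (opt_var N q) x"

lemma opt_integrand_integrable: "integrable (path_space N) opt_integrand"
  unfolding opt_integrand_def[abs_def] using entropy_integrand_integrable error_integrand_opt(1) by simp

lemma integral_opt_integrand:
  "(\<integral> x. opt_integrand x \<partial>path_space N) = (\<integral> x. q x * ln (q x) \<partial>path_space N)
    + (\<Sum>n\<in>{1..N}. real CARD('d) / 2 * ln (2 * pi * opt_var N q n) + real CARD('d) / 2)"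
  unfolding opt_integrand_def using entropy_integrand_integrable error_integrand_opt
  by (simp add: integral_entropy_integrand sum.distrib)

lemma KL_dens_opt_eq_eint:
  "KL_dens (path_space N) q (chain_dens N pN (opt_mean N q) (opt_var N q))
    = eint (path_space N) (\<lambda>x. cross_integrand x + ereal (opt_integrand x))"
proof -
  have "KL_dens (path_space N) q (chain_dens N pN (opt_mean N q) (opt_var N q))
      = eint (path_space N) (\<lambda>x. cross_integrand x + ereal (entropy_integrand (opt_var N q) x)
          + ereal (error_integrand (opt_mean N q) (opt_var N q) x))"
    by (rule KL_dens_chain_eq) (simp add: opt_var_pos)
  then show ?thesis by (simp add: opt_integrand_def add.assoc)
qed

lemma KL_dens_opt:
  "KL_dens (path_space N) q (chain_dens N pN (opt_mean N q) (opt_var N q))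
    = cross_entropy_dens lborel (marg1 N q N) pN
      + ereal (real CARD('d) / 2 * (\<Sum>n\<in>{1..N}. ln (2 * pi * exp 1 * opt_var N q n)))
      - ereal (entropy_dens (path_space N) q)"
proof -
  have "ln (2 * pi * exp 1 * opt_var N q n) = ln (2 * pi * opt_var N q n) + 1" if "n \<in> {1..N}" for n
    using opt_var_pos[of n] that by (simp add: ln_mult)
  then have sum_eq: "(\<Sum>n\<in>{1..N}. real CARD('d) / 2 * ln (2 * pi * opt_var N q n) + real CARD('d) / 2)
      = real CARD('d) / 2 * (\<Sum>n\<in>{1..N}. ln (2 * pi * exp 1 * opt_var N q n))"
    by (simp add: sum_distrib_left algebra_simps)
  have "KL_dens (path_space N) q (chain_dens N pN (opt_mean N q) (opt_var N q))
      = cross_entropy_dens lborel (marg1 N q N) pN + ereal (\<integral> x. opt_integrand x \<partial>path_space N)"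
    unfolding KL_dens_opt_eq_eint eint_cross_integrand[symmetric]
    by (rule eint_add_integrable[OF cross_integrand_measurable opt_integrand_integrable])
  also have "\<dots> = cross_entropy_dens lborel (marg1 N q N) pN
      + ereal (real CARD('d) / 2 * (\<Sum>n\<in>{1..N}. ln (2 * pi * exp 1 * opt_var N q n)))
      - ereal (entropy_dens (path_space N) q)"
    unfolding integral_opt_integrand sum_eq entropy_dens_def
    by (cases "cross_entropy_dens lborel (marg1 N q N) pN") simp_all
  finally show ?thesis .
qed

lemma integral_opt_integrand_le:
  assumes \<mu>: "\<And>n. n \<in> {1..N} \<Longrightarrow> \<mu> n \<in> borel_measurable borel" and s: "\<And>n. n \<in> {1..N} \<Longrightarrow> 0 < s n"
  shows "ereal (\<integral> x. opt_integrand x \<partial>path_space N)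
    \<le> ereal (\<integral> x. entropy_integrand s x \<partial>path_space N)
      + enn2ereal (\<integral>\<^sup>+ x. ennreal (error_integrand \<mu> s x) \<partial>path_space N)"
proof -
  have "(\<Sum>n\<in>{1..N}. real CARD('d) / 2 * ln (2 * pi * opt_var N q n) + real CARD('d) / 2)
      \<le> (\<Sum>n\<in>{1..N}. real CARD('d) / 2 * ln (2 * pi * s n) + real CARD('d) * opt_var N q n / (2 * s n))"
    using s opt_var_pos by (intro sum_mono gaussian_entropy_le_cross_entropy) auto
  then have "ereal (\<integral> x. opt_integrand x \<partial>path_space N)
      \<le> ereal (\<integral> x. entropy_integrand s x \<partial>path_space N)
        + ereal (\<Sum>n\<in>{1..N}. real CARD('d) * opt_var N q n / (2 * s n))"
    by (simp add: integral_opt_integrand integral_entropy_integrand sum.distrib)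
  also have "ereal (\<Sum>n\<in>{1..N}. real CARD('d) * opt_var N q n / (2 * s n))
      \<le> enn2ereal (\<integral>\<^sup>+ x. ennreal (error_integrand \<mu> s x) \<partial>path_space N)"
  proof -
    have "0 \<le> (\<Sum>n\<in>{1..N}. real CARD('d) * opt_var N q n / (2 * s n))"
      using opt_var_pos s by (intro sum_nonneg) (simp add: less_imp_le)
    moreover have "enn2ereal (ennreal (\<Sum>n\<in>{1..N}. real CARD('d) * opt_var N q n / (2 * s n)))
        \<le> enn2ereal (\<integral>\<^sup>+ x. ennreal (error_integrand \<mu> s x) \<partial>path_space N)"
      using nn_integral_error_integrand_ge[of \<mu> s, OF \<mu> s] by (simp add: less_eq_ennreal.rep_eq)
    ultimately show ?thesis by simp
  qed
  finally show ?thesis by (simp add: add_left_mono)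
qed

lemma KL_dens_opt_le:
  assumes \<mu>: "\<And>n. n \<in> {1..N} \<Longrightarrow> \<mu> n \<in> borel_measurable borel" and s: "\<And>n. n \<in> {1..N} \<Longrightarrow> 0 < s n"
  shows "KL_dens (path_space N) q (chain_dens N pN (opt_mean N q) (opt_var N q))
    \<le> KL_dens (path_space N) q (chain_dens N pN \<mu> s)"
proof -
  have "error_integrand \<mu> s x \<ge> 0" if "x \<in> space (path_space N)" for x
    unfolding error_integrand_def using q_nonneg[OF that] s
    by (intro sum_nonneg divide_nonneg_nonneg mult_nonneg_nonneg) (auto simp: less_imp_le)
  then have "eint (path_space N) (\<lambda>x. cross_integrand x + ereal (opt_integrand x))
      \<le> eint (path_space N) (\<lambda>x. cross_integrand x + ereal (entropy_integrand s x) + ereal (error_integrand \<mu> s x))"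
    by (intro eint_add_le cross_integrand_measurable entropy_integrand_integrable opt_integrand_integrable
        error_integrand_measurable integral_opt_integrand_le \<mu> s)
  moreover have "KL_dens (path_space N) q (chain_dens N pN \<mu> s)
      = eint (path_space N) (\<lambda>x. cross_integrand x + ereal (entropy_integrand s x) + ereal (error_integrand \<mu> s x))"
    by (rule KL_dens_chain_eq[OF s])
  ultimately show ?thesis unfolding KL_dens_opt_eq_eint by simp
qed

end

theorem lemma9:
  fixes N :: nat
    and q :: "(nat \<Rightarrow> real^'d) \<Rightarrow> real"
    and pN :: "real^'d \<Rightarrow> real"
  assumes q_meas: "q \<in> borel_measurable (path_space N)"
    and q_nonneg: "\<And>x. x \<in> space (path_space N) \<Longrightarrow> q x \<ge> 0"
    and q_prob: "(\<integral>\<^sup>+ x. ennreal (q x) \<partial>path_space N) = 1"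
    and q_moments: "\<And>n. n \<le> N \<Longrightarrow> integrable (path_space N) (\<lambda>x. q x * (norm (x n))\<^sup>2)"
    and q_entropy: "integrable (path_space N) (\<lambda>x. q x * ln (q x))"
    and pN_meas: "pN \<in> borel_measurable lborel"
    and pN_nonneg: "\<And>y. pN y \<ge> 0"
    and pN_prob: "(\<integral>\<^sup>+ y. ennreal (pN y) \<partial>lborel) = 1"
  shows "(\<forall>n\<in>{1..N}. opt_mean N q n \<in> borel_measurable borel \<and> opt_var N q n > 0)
    \<and> (\<forall>\<mu> s. (\<forall>n\<in>{1..N}. \<mu> n \<in> borel_measurable borel \<and> s n > 0) \<longrightarrow>
          KL_dens (path_space N) q (chain_dens N pN (opt_mean N q) (opt_var N q))
            \<le> KL_dens (path_space N) q (chain_dens N pN \<mu> s))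
    \<and> KL_dens (path_space N) q (chain_dens N pN (opt_mean N q) (opt_var N q))
        = cross_entropy_dens lborel (marg1 N q N) pN
          + ereal (real CARD('d) / 2 * (\<Sum>n\<in>{1..N}. ln (2 * pi * exp 1 * opt_var N q n)))
          - ereal (entropy_dens (path_space N) q)"
proof -
  interpret gaussian_chain_fit N q pN
    by unfold_locales (use q_meas q_nonneg q_prob q_moments pN_meas pN_nonneg q_entropy in auto)
  show ?thesis
    using opt_mean_measurable opt_var_pos KL_dens_opt_le KL_dens_opt by auto
qed

end
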